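(* Let $\kappa$ be a cumulant function with effective domain $\Theta$ satisfying Assumption (A1), let $\varphi>0$, and let $Y_1,\dots,Y_n$ be independent with $Y_i\sim\mathrm{EDF}(\theta_i,v_i,\varphi,\kappa)$, $v_i>0$, $\theta_i\in\mathring\Theta$, and $\theta_1\le\dots\le\theta_n$. Let $\mathcal J\subseteq\{1,\dots,n\}^2$ be any set of ordered pairs (i.e. $(j,k)\in\mathcal J\Rightarrow j\le k$), write $\mu_i=\mathbb E[Y_i]$, let $1-\alpha\in(0,1)$ and $\delta=\alpha/(2|\mathcal J|)$. Define $$L^\alpha_{\mathbf Y,i}=\sup_{(j,k)\in\mathcal J:\,\theta_i\ge\theta_k}l^\delta(Z_{j:k},v_{j:k},\varphi,\kappa),\qquad U^\alpha_{\mathbf Y,i}=\inf_{(j,k)\in\mathcal J:\,\theta_i\le\theta_j}u^\delta(Z_{j:k},v_{j:k},\varphi,\kappa),$$ with the conventions $\inf\emptyset=\sup_{\theta\in\mathring\Theta}\kappa'(\theta)$ and $\sup\emptyset=\inf_{\theta\in\mathring\Theta}\kappa'(\theta)$. Then $$\mathbb P\big(L^\alpha_{\mathbf Y,i}\le\mu_i\le U^\alpha_{\mathbf Y,i}\ \text{for all } i\in\{1,\dots,n\}\big)\ge1-\alpha.$$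
   Context: A real random variable $Y$ follows $\mathrm{EDF}(\theta,v,\varphi,\kappa)$ if it has density $f(y)=\exp\{(y\theta-\kappa(\theta))/(\varphi/v)+a(y;v/\varphi)\}$ with respect to a $\sigma$-finite measure on $\mathbb R$ not depending on $\theta$; $\Theta$ is the effective domain, $\kappa$ the cumulant function, $v>0$ the volume, $\varphi>0$ the dispersion. Assumption (A1): $\Theta$ has non-empty interior $\mathring{\Theta}$ and the dominating measures are not a single point mass; then $\mathbb E[Y]=\kappa'(\theta)$ for $\theta\in\mathring\Theta$, $h=(\kappa')^{-1}$ on $\kappa'(\mathring\Theta)$. For $\mu\in\kappa'(\mathring\Theta)$, $F(y;h(\mu),v,\varphi,\kappa)=\mathbb P(W\le y)$, $F^*(y;h(\mu),v,\varphi,\kappa)=\mathbb P(W<y)$ with $W\sim\mathrm{EDF}(h(\mu),v,\varphi,\kappa)$; $l^{\delta}(y,v,\varphi,\kappa)=\inf\{\mu\in\kappa'(\mathring\Theta):F^*(y;h(\mu),v,\varphi,\kappa)\le1-\delta\}$ and $u^{\delta}(y,v,\varphi,\kappa)=\sup\{\mu\in\kappa'(\mathring\Theta):F(y;h(\mu),v,\varphi,\kappa)\ge\delta\}$. For $1\le j\le k\le n$: $v_{j:k}=\sum_{i=j}^kv_i$ and $Z_{j:k}=\frac1{v_{j:k}}\sum_{i=j}^kv_iY_i$. *)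

theory Defs
  imports "HOL-Probability.Probability"
begin

text \<open>Exponential dispersion family.  The dominating measure and the function a
  depend only on the weight w = v/phi: nu w and a y w.\<close>

definition EDF :: "(real \<Rightarrow> real measure) \<Rightarrow> (real \<Rightarrow> real \<Rightarrow> real) \<Rightarrow> (real \<Rightarrow> real)
    \<Rightarrow> real \<Rightarrow> real \<Rightarrow> real \<Rightarrow> real measure" where
  "EDF \<nu> a \<kappa> \<theta> v \<phi> =
     density (\<nu> (v / \<phi>)) (\<lambda>y. ennreal (exp ((y * \<theta> - \<kappa> \<theta>) / (\<phi> / v) + a y (v / \<phi>))))"

text \<open>kappa is the cumulant function with effective domain Theta of the family
  (nu, a): for every weight w > 0, nu w is a sigma-finite measure on the reals,
  Theta is exactly the set where the Laplace-type integral is finite, and there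
  it equals exp (w * kappa theta), i.e. all EDF densities integrate to one.\<close>

definition is_EDF_family :: "(real \<Rightarrow> real measure) \<Rightarrow> (real \<Rightarrow> real \<Rightarrow> real) \<Rightarrow> (real \<Rightarrow> real)
    \<Rightarrow> real set \<Rightarrow> bool" where
  "is_EDF_family \<nu> a \<kappa> \<Theta> \<longleftrightarrow>
     (\<forall>w>0. sets (\<nu> w) = sets borel \<and> sigma_finite_measure (\<nu> w) \<and>
        (\<lambda>y. a y w) \<in> borel_measurable borel \<and>
        \<Theta> = {\<theta>. (\<integral>\<^sup>+ y. ennreal (exp (y * \<theta> * w + a y w)) \<partial>\<nu> w) < \<infinity>} \<and>
        (\<forall>\<theta>\<in>\<Theta>. (\<integral>\<^sup>+ y. ennreal (exp (y * \<theta> * w + a y w)) \<partial>\<nu> w) = ennreal (exp (w * \<kappa> \<theta>))))"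

definition A1 :: "(real \<Rightarrow> real measure) \<Rightarrow> real set \<Rightarrow> bool" where
  "A1 \<nu> \<Theta> \<longleftrightarrow> interior \<Theta> \<noteq> {} \<and>
     (\<forall>w>0. \<not> (\<exists>c. emeasure (\<nu> w) (UNIV - {c}) = 0))"

definition mean_space :: "(real \<Rightarrow> real) \<Rightarrow> real set \<Rightarrow> real set" where
  "mean_space \<kappa> \<Theta> = deriv \<kappa> ` interior \<Theta>"

definition link_h :: "(real \<Rightarrow> real) \<Rightarrow> real set \<Rightarrow> real \<Rightarrow> real" where
  "link_h \<kappa> \<Theta> \<mu> = the_inv_into (interior \<Theta>) (deriv \<kappa>) \<mu>"

definition edf_F :: "(real \<Rightarrow> real measure) \<Rightarrow> (real \<Rightarrow> real \<Rightarrow> real) \<Rightarrow> (real \<Rightarrow> real) \<Rightarrow> real set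
    \<Rightarrow> real \<Rightarrow> real \<Rightarrow> real \<Rightarrow> real \<Rightarrow> real" where
  "edf_F \<nu> a \<kappa> \<Theta> y \<mu> v \<phi> = measure (EDF \<nu> a \<kappa> (link_h \<kappa> \<Theta> \<mu>) v \<phi>) {..y}"

definition edf_Fstar :: "(real \<Rightarrow> real measure) \<Rightarrow> (real \<Rightarrow> real \<Rightarrow> real) \<Rightarrow> (real \<Rightarrow> real) \<Rightarrow> real set
    \<Rightarrow> real \<Rightarrow> real \<Rightarrow> real \<Rightarrow> real \<Rightarrow> real" where
  "edf_Fstar \<nu> a \<kappa> \<Theta> y \<mu> v \<phi> = measure (EDF \<nu> a \<kappa> (link_h \<kappa> \<Theta> \<mu>) v \<phi>) {..<y}"

definition inf_conv :: "real set \<Rightarrow> ereal set \<Rightarrow> ereal" where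
  "inf_conv Mset S = (if S = {} then Sup (ereal ` Mset) else Inf S)"

definition sup_conv :: "real set \<Rightarrow> ereal set \<Rightarrow> ereal" where
  "sup_conv Mset S = (if S = {} then Inf (ereal ` Mset) else Sup S)"

definition l_delta :: "(real \<Rightarrow> real measure) \<Rightarrow> (real \<Rightarrow> real \<Rightarrow> real) \<Rightarrow> (real \<Rightarrow> real) \<Rightarrow> real set
    \<Rightarrow> real \<Rightarrow> real \<Rightarrow> real \<Rightarrow> real \<Rightarrow> ereal" where
  "l_delta \<nu> a \<kappa> \<Theta> \<delta> y v \<phi> =
     inf_conv (mean_space \<kappa> \<Theta>)
       (ereal ` {\<mu> \<in> mean_space \<kappa> \<Theta>. edf_Fstar \<nu> a \<kappa> \<Theta> y \<mu> v \<phi> \<le> 1 - \<delta>})"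

definition u_delta :: "(real \<Rightarrow> real measure) \<Rightarrow> (real \<Rightarrow> real \<Rightarrow> real) \<Rightarrow> (real \<Rightarrow> real) \<Rightarrow> real set
    \<Rightarrow> real \<Rightarrow> real \<Rightarrow> real \<Rightarrow> real \<Rightarrow> ereal" where
  "u_delta \<nu> a \<kappa> \<Theta> \<delta> y v \<phi> =
     sup_conv (mean_space \<kappa> \<Theta>)
       (ereal ` {\<mu> \<in> mean_space \<kappa> \<Theta>. edf_F \<nu> a \<kappa> \<Theta> y \<mu> v \<phi> \<ge> \<delta>})"

definition vol :: "(nat \<Rightarrow> real) \<Rightarrow> nat \<Rightarrow> nat \<Rightarrow> real" where
  "vol v j k = (\<Sum>i = j..k. v i)"

definition Zmean :: "(nat \<Rightarrow> real) \<Rightarrow> (nat \<Rightarrow> 'a \<Rightarrow> real) \<Rightarrow> nat \<Rightarrow> nat \<Rightarrow> 'a \<Rightarrow> real" where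
  "Zmean v Y j k \<omega> = (1 / vol v j k) * (\<Sum>i = j..k. v i * Y i \<omega>)"

definition L_bound :: "(real \<Rightarrow> real measure) \<Rightarrow> (real \<Rightarrow> real \<Rightarrow> real) \<Rightarrow> (real \<Rightarrow> real) \<Rightarrow> real set
    \<Rightarrow> real \<Rightarrow> real \<Rightarrow> (nat \<times> nat) set \<Rightarrow> (nat \<Rightarrow> real) \<Rightarrow> (nat \<Rightarrow> real)
    \<Rightarrow> (nat \<Rightarrow> 'a \<Rightarrow> real) \<Rightarrow> nat \<Rightarrow> 'a \<Rightarrow> ereal" where
  "L_bound \<nu> a \<kappa> \<Theta> \<phi> \<delta> J \<theta> v Y i \<omega> =
     sup_conv (mean_space \<kappa> \<Theta>)
       ((\<lambda>(j, k). l_delta \<nu> a \<kappa> \<Theta> \<delta> (Zmean v Y j k \<omega>) (vol v j k) \<phi>)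
          ` {(j, k) \<in> J. \<theta> i \<ge> \<theta> k})"

definition U_bound :: "(real \<Rightarrow> real measure) \<Rightarrow> (real \<Rightarrow> real \<Rightarrow> real) \<Rightarrow> (real \<Rightarrow> real) \<Rightarrow> real set
    \<Rightarrow> real \<Rightarrow> real \<Rightarrow> (nat \<times> nat) set \<Rightarrow> (nat \<Rightarrow> real) \<Rightarrow> (nat \<Rightarrow> real)
    \<Rightarrow> (nat \<Rightarrow> 'a \<Rightarrow> real) \<Rightarrow> nat \<Rightarrow> 'a \<Rightarrow> ereal" where
  "U_bound \<nu> a \<kappa> \<Theta> \<phi> \<delta> J \<theta> v Y i \<omega> =
     inf_conv (mean_space \<kappa> \<Theta>)
       ((\<lambda>(j, k). u_delta \<nu> a \<kappa> \<Theta> \<delta> (Zmean v Y j k \<omega>) (vol v j k) \<phi>)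
          ` {(j, k) \<in> J. \<theta> i \<le> \<theta> j})"

end

(*
  Fix a block (j, k) of J and put t = theta k, so that theta i <= t on the block.  In an
  exponential family a larger canonical parameter multiplies the density by a nondecreasing
  likelihood ratio, hence gives a stochastically larger law; stochastic order is preserved by
  convolution; and at a fixed parameter the laws of the scaled observations (v/phi) Y form a
  convolution semigroup in the weight v/phi, by uniqueness of moment generating functions.
  Consequently Z_{j:k} is stochastically smaller than a single EDF(t, v_{j:k}) observation, and
  since l^delta is nondecreasing in y, P(l^delta(Z_{j:k}) > kappa'(t)) <= delta by the defining
  property of l^delta.  Symmetrically P(u^delta(Z_{j:k}) < kappa'(theta j)) <= delta.
  Because kappa'' is a variance, positive under (A1), mu_i = kappa'(theta i) is increasing in
  theta i, so outside these 2 |J| events all bounds hold at once; a union bound finishes.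
*)

theory Submission
  imports Defs
begin

section \<open>Exponential moments and moment generating functions\<close>

lemma sum_power_div_fact_le_exp:
  fixes x :: real
  assumes "0 \<le> x"
  shows "(\<Sum>n<N. x ^ n / fact n) \<le> exp x"
proof -
  have "(\<lambda>n. x ^ n / fact n) sums exp x"
    using exp_converges[of x] by (simp add: divide_inverse mult.commute)
  then show ?thesis
    using assms sum_le_suminf[of "\<lambda>n. x ^ n / fact n" "{..<N}"] by (simp add: sums_iff)
qed

lemma abs_power_mult_exp_le:
  fixes y \<tau> r :: real
  assumes "0 \<le> \<tau>" "\<tau> < r"
  shows "\<bar>y\<bar> ^ k * exp (\<tau> * \<bar>y\<bar>) \<le> fact k / (r - \<tau>) ^ k * exp (r * \<bar>y\<bar>)"
proof -
  define x where "x = (r - \<tau>) * \<bar>y\<bar>"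
  have pos: "(r - \<tau>) ^ k > 0" using assms by simp
  have "x ^ k / fact k \<le> (\<Sum>n<Suc k. x ^ n / fact n)"
    using assms by (intro member_le_sum) (auto simp: x_def)
  also have "\<dots> \<le> exp x"
    using assms by (intro sum_power_div_fact_le_exp) (simp add: x_def)
  finally have "(r - \<tau>) ^ k * \<bar>y\<bar> ^ k \<le> fact k * exp x"
    by (simp add: x_def divide_le_eq power_mult_distrib mult.commute)
  then have "\<bar>y\<bar> ^ k \<le> fact k / (r - \<tau>) ^ k * exp x"
    using pos by (simp add: field_simps)
  then have "\<bar>y\<bar> ^ k * exp (\<tau> * \<bar>y\<bar>) \<le> fact k / (r - \<tau>) ^ k * (exp x * exp (\<tau> * \<bar>y\<bar>))"
    using mult_right_mono[OF _ exp_ge_zero[of "\<tau> * \<bar>y\<bar>"]] by (metis mult.assoc)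
  also have "exp x * exp (\<tau> * \<bar>y\<bar>) = exp (r * \<bar>y\<bar>)"
    by (simp add: x_def exp_add[symmetric] left_diff_distrib)
  finally show ?thesis .
qed

lemma integrable_abs_power_mult_exp:
  fixes P :: "real measure"
  assumes sets: "sets P = sets borel" and int: "integrable P (\<lambda>y. exp (r * \<bar>y\<bar>))"
    and "0 \<le> \<tau>" "\<tau> < r"
  shows "integrable P (\<lambda>y. \<bar>y\<bar> ^ k * exp (\<tau> * \<bar>y\<bar>))"
proof (rule Bochner_Integration.integrable_bound)
  show "integrable P (\<lambda>y. fact k / (r - \<tau>) ^ k * exp (r * \<bar>y\<bar>))"
    using int by simp
  show "(\<lambda>y. \<bar>y\<bar> ^ k * exp (\<tau> * \<bar>y\<bar>)) \<in> borel_measurable P"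
    by (simp add: measurable_cong_sets[OF sets refl])
  show "AE y in P. norm (\<bar>y\<bar> ^ k * exp (\<tau> * \<bar>y\<bar>)) \<le> norm (fact k / (r - \<tau>) ^ k * exp (r * \<bar>y\<bar>))"
    using abs_power_mult_exp_le[OF assms(3,4)] assms by (auto intro!: AE_I2 simp: abs_mult)
qed

lemma integrable_power_of_exp_abs:
  fixes P :: "real measure"
  assumes "sets P = sets borel" "integrable P (\<lambda>y. exp (r * \<bar>y\<bar>))" "r > 0"
  shows "integrable P (\<lambda>y. y ^ k)"
proof -
  have "integrable P (\<lambda>y. \<bar>y\<bar> ^ k * exp (0 * \<bar>y\<bar>))"
    using assms by (intro integrable_abs_power_mult_exp) auto
  then show ?thesis
    using assms(1) by (subst integrable_abs_iff[symmetric]) (auto simp: power_abs)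
qed

lemma integrable_exp_abs_of_mgf:
  fixes P :: "real measure"
  assumes sets: "sets P = sets borel" and "r \<ge> 0"
    and "(\<integral>\<^sup>+y. exp (r * y) \<partial>P) < \<infinity>" and "(\<integral>\<^sup>+y. exp (- r * y) \<partial>P) < \<infinity>"
  shows "integrable P (\<lambda>y. exp (r * \<bar>y\<bar>))"
proof (rule integrableI_nonneg)
  show "(\<lambda>y. exp (r * \<bar>y\<bar>)) \<in> borel_measurable P"
    by (simp add: measurable_cong_sets[OF sets refl])
  have "(\<integral>\<^sup>+y. exp (r * \<bar>y\<bar>) \<partial>P) \<le> (\<integral>\<^sup>+y. (ennreal (exp (r * y)) + ennreal (exp (- r * y))) \<partial>P)"
  proof (rule nn_integral_mono)
    fix y
    have "exp (r * \<bar>y\<bar>) \<le> exp (r * y) + exp (- r * y)"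
      by (cases "y \<ge> 0") (auto simp: add_increasing add_increasing2)
    then show "ennreal (exp (r * \<bar>y\<bar>)) \<le> ennreal (exp (r * y)) + ennreal (exp (- r * y))"
      by (simp add: ennreal_plus[symmetric] del: ennreal_plus)
  qed
  also have "\<dots> = (\<integral>\<^sup>+y. exp (r * y) \<partial>P) + (\<integral>\<^sup>+y. exp (- r * y) \<partial>P)"
    by (rule nn_integral_add) (simp_all add: measurable_cong_sets[OF sets refl])
  also have "\<dots> < \<infinity>" using assms by (simp add: less_top)
  finally show "(\<integral>\<^sup>+y. exp (r * \<bar>y\<bar>) \<partial>P) < \<infinity>" .
qed simp

lemma integrable_exp_mult:
  fixes P :: "real measure"
  assumes sets: "sets P = sets borel" and int: "integrable P (\<lambda>y. exp (r * \<bar>y\<bar>))"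
    and "\<bar>s\<bar> \<le> r"
  shows "integrable P (\<lambda>y. exp (s * y))"
proof (rule Bochner_Integration.integrable_bound[OF int])
  show "(\<lambda>y. exp (s * y)) \<in> borel_measurable P"
    by (simp add: measurable_cong_sets[OF sets refl])
  have "s * y \<le> r * \<bar>y\<bar>" for y
    using assms(3) abs_ge_self[of "s * y"] mult_right_mono[of "\<bar>s\<bar>" r "\<bar>y\<bar>"]
    by (simp add: abs_mult)
  then show "AE y in P. norm (exp (s * y)) \<le> norm (exp (r * \<bar>y\<bar>))"
    by (intro AE_I2) simp
qed

lemma sums_integral_dominated:
  fixes f :: "nat \<Rightarrow> 'b \<Rightarrow> 'a::{banach,second_countable_topology}"
  assumes f_int: "\<And>n. integrable M (f n)" and G_int: "integrable M G"
    and F_meas: "F \<in> borel_measurable M"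
    and sums: "\<And>x. (\<lambda>n. f n x) sums F x"
    and bound: "\<And>x N. (\<Sum>n<N. norm (f n x)) \<le> G x"
  shows "(\<lambda>n. integral\<^sup>L M (f n)) sums integral\<^sup>L M F"
proof -
  have "(\<lambda>N. integral\<^sup>L M (\<lambda>x. \<Sum>n<N. f n x)) \<longlonglongrightarrow> integral\<^sup>L M F"
  proof (rule integral_dominated_convergence[OF F_meas _ G_int])
    show "AE x in M. (\<lambda>N. \<Sum>n<N. f n x) \<longlonglongrightarrow> F x"
      using sums by (simp add: sums_def)
    show "AE x in M. norm (\<Sum>n<N. f n x) \<le> G x" for N
    proof (rule AE_I2)
      fix x
      show "norm (\<Sum>n<N. f n x) \<le> G x"
        using norm_sum[of "\<lambda>n. f n x" "{..<N}"] bound[of x N] by linarith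
    qed
  qed (use f_int in auto)
  then show ?thesis
    using f_int by (simp add: sums_def)
qed

text \<open>Generic in the field so that the complex instance at imaginary arguments is the
  characteristic function.\<close>

definition exp_moment :: "real measure \<Rightarrow> nat \<Rightarrow> 'a::{real_normed_field,banach,second_countable_topology} \<Rightarrow> 'a" where
  "exp_moment P m t = (\<integral>y. of_real y ^ m * exp (of_real y * t) \<partial>P)"

lemma exp_series_sums:
  fixes t u :: "'a::{real_normed_field,banach}"
  shows "(\<lambda>n. u ^ n / fact n * (of_real y ^ (n + m) * exp (of_real y * t)))
    sums (of_real y ^ m * exp (of_real y * (t + u)))"
proof -
  have "(\<lambda>n. (of_real y * u) ^ n / fact n) sums exp (of_real y * u)"
    using exp_converges[of "of_real y * u"]
    by (simp add: divide_inverse scaleR_conv_of_real of_real_inverse mult.commute)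
  then have "(\<lambda>n. of_real y ^ m * exp (of_real y * t) * ((of_real y * u) ^ n / fact n)) sums
      (of_real y ^ m * exp (of_real y * t) * exp (of_real y * u))"
    by (rule sums_mult)
  moreover have "(\<lambda>n. of_real y ^ m * exp (of_real y * t) * ((of_real y * u) ^ n / fact n))
      = (\<lambda>n. u ^ n / fact n * (of_real y ^ (n + m) * exp (of_real y * t)))"
    by (simp add: fun_eq_iff power_add power_mult_distrib mult_ac)
  moreover have "of_real y ^ m * exp (of_real y * t) * exp (of_real y * u)
      = of_real y ^ m * exp (of_real y * (t + u))"
    by (simp add: distrib_left exp_add mult.assoc)
  ultimately show ?thesis by (simp only:)
qed

lemma exp_series_norm_sum_le:
  fixes t u :: "'a::{real_normed_field,banach}"
  assumes bound: "norm (exp (of_real y * t)) \<le> exp (\<tau> * \<bar>y\<bar>)"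
  shows "(\<Sum>n<N. norm (u ^ n / fact n * (of_real y ^ (n + m) * exp (of_real y * t))))
    \<le> \<bar>y\<bar> ^ m * exp ((\<tau> + norm u) * \<bar>y\<bar>)"
proof -
  have "(\<Sum>n<N. norm (u ^ n / fact n * (of_real y ^ (n + m) * exp (of_real y * t))))
      \<le> (\<Sum>n<N. \<bar>y\<bar> ^ m * exp (\<tau> * \<bar>y\<bar>) * ((\<bar>y\<bar> * norm u) ^ n / fact n))"
  proof (rule sum_mono)
    fix n
    have "norm (u ^ n / fact n * (of_real y ^ (n + m) * exp (of_real y * t)))
        = \<bar>y\<bar> ^ m * norm (exp (of_real y * t)) * ((\<bar>y\<bar> * norm u) ^ n / fact n)"
      by (simp add: norm_mult norm_power norm_divide power_add power_mult_distrib)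
    also have "\<dots> \<le> \<bar>y\<bar> ^ m * exp (\<tau> * \<bar>y\<bar>) * ((\<bar>y\<bar> * norm u) ^ n / fact n)"
      by (intro mult_right_mono mult_left_mono bound) auto
    finally show "norm (u ^ n / fact n * (of_real y ^ (n + m) * exp (of_real y * t))) \<le> \<dots>" .
  qed
  also have "\<dots> = \<bar>y\<bar> ^ m * exp (\<tau> * \<bar>y\<bar>) * (\<Sum>n<N. (\<bar>y\<bar> * norm u) ^ n / fact n)"
    by (simp add: sum_distrib_left)
  also have "\<dots> \<le> \<bar>y\<bar> ^ m * exp (\<tau> * \<bar>y\<bar>) * exp (\<bar>y\<bar> * norm u)"
    by (intro mult_left_mono sum_power_div_fact_le_exp) auto
  also have "\<dots> = \<bar>y\<bar> ^ m * exp ((\<tau> + norm u) * \<bar>y\<bar>)"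
    by (simp add: mult.assoc exp_add[symmetric] algebra_simps)
  finally show ?thesis .
qed

lemma exp_moment_sums:
  fixes t u :: "'a::{real_normed_field,banach,second_countable_topology}"
  assumes sets: "sets P = sets borel" and int: "integrable P (\<lambda>y. exp (r * \<bar>y\<bar>))"
    and tau: "0 \<le> \<tau>" "\<tau> + norm u < r"
    and bound: "\<And>y. norm (exp (of_real y * t)) \<le> exp (\<tau> * \<bar>y\<bar>)"
  shows "(\<lambda>n. u ^ n / fact n * exp_moment P (n + m) t) sums exp_moment P m (t + u)"
proof -
  have meas: "\<And>f. f \<in> borel_measurable borel \<Longrightarrow> f \<in> borel_measurable P"
    by (simp add: measurable_cong_sets[OF sets refl])
  define f where "f n y = u ^ n / fact n * (of_real y ^ (n + m) * exp (of_real y * t))" for n y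
  define G where "G y = \<bar>y\<bar> ^ m * exp ((\<tau> + norm u) * \<bar>y\<bar>)" for y
  have G_int: "integrable P G"
    unfolding G_def using tau by (intro integrable_abs_power_mult_exp[OF sets int]) auto
  have bound_G: "(\<Sum>n<N. norm (f n y)) \<le> G y" for N y
    unfolding f_def G_def by (rule exp_series_norm_sum_le[OF bound])
  have f_int: "integrable P (f n)" for n
  proof (rule Bochner_Integration.integrable_bound[OF G_int])
    show "f n \<in> borel_measurable P"
      unfolding f_def by (intro meas) measurable
    have "norm (f n y) \<le> (\<Sum>i<Suc n. norm (f i y))" for y
      by (intro member_le_sum) auto
    then have "norm (f n y) \<le> G y" for y
      using bound_G[of y "Suc n"] by (rule order_trans)
    then show "AE y in P. norm (f n y) \<le> norm (G y)"
      by (intro AE_I2) (simp add: G_def)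
  qed
  have "(\<lambda>n. integral\<^sup>L P (f n)) sums exp_moment P m (t + u)"
    unfolding exp_moment_def using exp_series_sums[of u _ m t]
    by (intro sums_integral_dominated[OF f_int G_int _ _ bound_G] meas) (measurable, simp add: f_def)
  moreover have "integral\<^sup>L P (f n) = u ^ n / fact n * exp_moment P (n + m) t" for n
    unfolding f_def exp_moment_def by (rule integral_mult_right_zero)
  ultimately show ?thesis by simp
qed

lemma exp_moment_has_field_derivative:
  fixes P :: "real measure"
  assumes sets: "sets P = sets borel" and int: "integrable P (\<lambda>y. exp (r * \<bar>y\<bar>))"
    and s: "\<bar>s\<bar> < r"
  shows "((\<lambda>x. exp_moment P m x :: real) has_field_derivative exp_moment P (Suc m) s) (at s)"
proof -
  define c where "c n = exp_moment P (n + m) s / fact n" for n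
  define F where "F u = (\<Sum>n. c n * u ^ n)" for u :: real
  define \<rho> where "\<rho> = r - \<bar>s\<bar>"
  have rho: "\<rho> > 0" using s by (simp add: \<rho>_def)
  have power_series: "(\<lambda>n. c n * u ^ n) sums exp_moment P m (s + u)" if "\<bar>u\<bar> < \<rho>" for u
  proof -
    have "y * s \<le> \<bar>s\<bar> * \<bar>y\<bar>" for y :: real
      by (metis abs_ge_self abs_mult mult.commute)
    then have "(\<lambda>n. u ^ n / fact n * exp_moment P (n + m) s) sums exp_moment P m (s + u)"
      using that by (intro exp_moment_sums[OF sets int, of "\<bar>s\<bar>"]) (auto simp: \<rho>_def)
    then show ?thesis by (simp add: c_def mult.commute)
  qed
  have "summable (\<lambda>n. c n * (\<rho>/2) ^ n)"
    using power_series[of "\<rho>/2"] rho by (auto simp: sums_iff)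
  then have "(F has_field_derivative (\<Sum>n. diffs c n * 0 ^ n)) (at 0)"
    unfolding F_def by (rule termdiffs_strong) (use rho in simp)
  then have "(F has_field_derivative c 1) (at (s + - s))"
    by (simp add: diffs_def)
  then have "((\<lambda>x. F (x + - s)) has_field_derivative c 1) (at s)"
    by (simp only: DERIV_shift)
  then have "((\<lambda>x. exp_moment P m x) has_field_derivative c 1) (at s)"
  proof (rule has_field_derivative_transform_within_open)
    fix x assume "x \<in> ball s \<rho>"
    then have "\<bar>x + - s\<bar> < \<rho>" by (simp add: dist_real_def abs_minus_commute)
    then show "F (x + - s) = exp_moment P m x"
      using power_series by (simp add: F_def sums_iff)
  qed (use rho in auto)
  then show ?thesis by (simp add: c_def)
qed

lemma exp_moment_comp_affine_has_derivative:
  fixes P :: "real measure"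
  assumes "sets P = sets borel" "integrable P (\<lambda>y. exp (r * \<bar>y\<bar>))" "\<bar>w * (x - x0)\<bar> < r"
  shows "((\<lambda>x. exp_moment P k (w * (x - x0)) :: real)
    has_real_derivative exp_moment P (Suc k) (w * (x - x0)) * w) (at x)"
  using assms by (intro DERIV_chain2[OF exp_moment_has_field_derivative]) (auto intro!: derivative_eq_intros)

lemma real_exp_moments_eq:
  fixes P1 P2 :: "real measure"
  assumes sets1: "sets P1 = sets borel" and sets2: "sets P2 = sets borel"
    and int1: "integrable P1 (\<lambda>y. exp (r * \<bar>y\<bar>))" and int2: "integrable P2 (\<lambda>y. exp (r * \<bar>y\<bar>))"
    and mgf_eq: "\<And>s. \<bar>s\<bar> < r \<Longrightarrow> exp_moment P1 0 s = (exp_moment P2 0 s :: real)"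
    and "\<bar>s\<bar> < r"
  shows "exp_moment P1 m s = (exp_moment P2 m s :: real)"
  using \<open>\<bar>s\<bar> < r\<close>
proof (induction m arbitrary: s)
  case 0
  then show ?case by (rule mgf_eq)
next
  case (Suc m)
  have "((\<lambda>x. exp_moment P2 m x :: real) has_field_derivative exp_moment P1 (Suc m) s) (at s)"
  proof (rule has_field_derivative_transform_within_open)
    show "((\<lambda>x. exp_moment P1 m x :: real) has_field_derivative exp_moment P1 (Suc m) s) (at s)"
      by (rule exp_moment_has_field_derivative[OF sets1 int1 Suc.prems])
    show "exp_moment P1 m x = exp_moment P2 m x" if "x \<in> ball 0 r" for x :: real
      using that Suc.IH by simp
  qed (use Suc.prems in auto)
  then show ?case
    using exp_moment_has_field_derivative[OF sets2 int2 Suc.prems] by (rule DERIV_unique)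
qed

lemma exp_moment_imaginary_sums:
  fixes P :: "real measure"
  assumes "sets P = sets borel" "integrable P (\<lambda>y. exp (r * \<bar>y\<bar>))" "\<bar>u\<bar> < r"
  shows "(\<lambda>n. (\<i> * of_real u) ^ n / fact n * exp_moment P (n + m) (\<i> * of_real t))
    sums exp_moment P m (\<i> * of_real (t + u))"
proof -
  have "(\<lambda>n. (\<i> * of_real u) ^ n / fact n * exp_moment P (n + m) (\<i> * of_real t))
      sums exp_moment P m (\<i> * of_real t + \<i> * of_real u)"
  proof (rule exp_moment_sums[OF assms(1,2), of 0])
    show "0 + norm (\<i> * complex_of_real u) < r" using assms(3) by (simp add: norm_mult)
    fix y :: real
    have "complex_of_real y * (\<i> * complex_of_real t) = \<i> * complex_of_real (y * t)" by simp
    then show "norm (exp (complex_of_real y * (\<i> * complex_of_real t))) \<le> exp (0 * \<bar>y\<bar>)"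
      by (simp only: norm_exp_i_times) simp
  qed simp
  then show ?thesis by (simp add: distrib_left)
qed

text \<open>The power series of the moments at the real point 0 has radius at least r; re-expanding
  it along the imaginary axis in steps shorter than r reaches every point of that axis.\<close>

lemma imaginary_exp_moments_eq:
  fixes P1 P2 :: "real measure"
  assumes sets1: "sets P1 = sets borel" and sets2: "sets P2 = sets borel"
    and int1: "integrable P1 (\<lambda>y. exp (r * \<bar>y\<bar>))" and int2: "integrable P2 (\<lambda>y. exp (r * \<bar>y\<bar>))"
    and r: "r > 0"
    and real_eq: "\<And>m s. \<bar>s\<bar> < r \<Longrightarrow> exp_moment P1 m s = (exp_moment P2 m s :: real)"
  shows "exp_moment P1 m (\<i> * of_real t) = (exp_moment P2 m (\<i> * of_real t) :: complex)"
proof -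
  define Q where "Q t \<longleftrightarrow> (\<forall>m. exp_moment P1 m (\<i> * of_real t) = (exp_moment P2 m (\<i> * of_real t) :: complex))" for t
  have complex_at_0: "exp_moment P m (0::complex) = of_real (exp_moment P m (0::real))" for P m
    unfolding exp_moment_def using integral_complex_of_real[of P "\<lambda>y. y ^ m"] by simp
  have "Q 0"
    using real_eq[of 0] r by (simp add: Q_def complex_at_0)
  have step: "Q (t + u)" if "Q t" "\<bar>u\<bar> < r" for t u
    unfolding Q_def
  proof
    fix m
    have "(\<lambda>n. (\<i> * of_real u) ^ n / fact n * exp_moment P2 (n + m) (\<i> * of_real t))
        sums exp_moment P1 m (\<i> * of_real (t + u))"
      using exp_moment_imaginary_sums[OF sets1 int1 \<open>\<bar>u\<bar> < r\<close>, of m t] \<open>Q t\<close> by (simp add: Q_def)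
    then show "exp_moment P1 m (\<i> * of_real (t + u)) = (exp_moment P2 m (\<i> * of_real (t + u)) :: complex)"
      using exp_moment_imaginary_sums[OF sets2 int2 \<open>\<bar>u\<bar> < r\<close>, of m t] by (rule sums_unique2)
  qed
  obtain N :: nat where N: "\<bar>t\<bar> / r < real N" using reals_Archimedean2 by blast
  moreover have "\<bar>t\<bar> / r \<ge> 0" using r by simp
  ultimately have "N > 0" by (intro Nat.gr0I) auto
  define h where "h = t / real N"
  have "\<bar>h\<bar> < r" using N r \<open>N > 0\<close> by (simp add: h_def abs_divide divide_less_eq mult.commute)
  have "Q (real k * h)" for k
  proof (induction k)
    case (Suc k)
    then show ?case using step[OF Suc \<open>\<bar>h\<bar> < r\<close>] by (simp add: distrib_right add.commute)
  qed (use \<open>Q 0\<close> in simp)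
  from this[of N] show ?thesis using \<open>N > 0\<close> by (simp add: h_def Q_def)
qed

lemma real_distribution_eq_of_mgf_eq:
  fixes P1 P2 :: "real measure"
  assumes P1: "real_distribution P1" and P2: "real_distribution P2"
    and r: "r > 0"
    and finite: "\<And>s. \<bar>s\<bar> < r \<Longrightarrow> (\<integral>\<^sup>+y. exp (s * y) \<partial>P1) < \<infinity>"
    and mgf_eq: "\<And>s. \<bar>s\<bar> < r \<Longrightarrow> (\<integral>\<^sup>+y. exp (s * y) \<partial>P1) = (\<integral>\<^sup>+y. exp (s * y) \<partial>P2)"
  shows "P1 = P2"
proof -
  note sets1 = real_distribution.events_eq_borel[OF P1]
  note sets2 = real_distribution.events_eq_borel[OF P2]
  define r' where "r' = r / 2"
  have r': "r' > 0" "r' < r" using r by (auto simp: r'_def)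
  have int1: "integrable P1 (\<lambda>y. exp (r' * \<bar>y\<bar>))"
    by (rule integrable_exp_abs_of_mgf[OF sets1]) (use r' finite[of r'] finite[of "-r'"] in auto)
  have int2: "integrable P2 (\<lambda>y. exp (r' * \<bar>y\<bar>))"
    by (rule integrable_exp_abs_of_mgf[OF sets2])
      (use r' finite[of r'] finite[of "-r'"] mgf_eq[of r'] mgf_eq[of "-r'"] in auto)
  have "exp_moment P1 0 s = (exp_moment P2 0 s :: real)" if s: "\<bar>s\<bar> < r'" for s
  proof -
    have "ennreal (\<integral>y. exp (s * y) \<partial>P1) = (\<integral>\<^sup>+y. exp (s * y) \<partial>P1)"
      using s by (intro nn_integral_eq_integral[symmetric] integrable_exp_mult[OF sets1 int1]) auto
    also have "\<dots> = (\<integral>\<^sup>+y. exp (s * y) \<partial>P2)" using mgf_eq s r' by simp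
    also have "\<dots> = ennreal (\<integral>y. exp (s * y) \<partial>P2)"
      using s by (intro nn_integral_eq_integral integrable_exp_mult[OF sets2 int2]) auto
    finally have "(\<integral>y. exp (s * y) \<partial>P1) = (\<integral>y. exp (s * y) \<partial>P2)"
      by (subst (asm) ennreal_inj) (auto intro!: integral_nonneg_AE)
    then show ?thesis by (simp add: exp_moment_def mult.commute)
  qed
  then have "exp_moment P1 m s = (exp_moment P2 m s :: real)" if "\<bar>s\<bar> < r'" for m s
    using real_exp_moments_eq[OF sets1 sets2 int1 int2 _ that] by blast
  then have "exp_moment P1 0 (\<i> * of_real t) = (exp_moment P2 0 (\<i> * of_real t) :: complex)" for t
    using imaginary_exp_moments_eq[OF sets1 sets2 int1 int2 r'(1)] by blast
  moreover have "char P t = exp_moment P 0 (\<i> * of_real t)" for P t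
    unfolding char_def exp_moment_def by (simp add: mult_ac)
  ultimately have "char P1 = char P2" by auto
  then show ?thesis using P1 P2 Levy_uniqueness by blast
qed

lemma nn_integral_exp_convolution:
  assumes "real_distribution M" "real_distribution N"
  shows "(\<integral>\<^sup>+x. ennreal (exp (s * x)) \<partial>(M \<star> N))
    = (\<integral>\<^sup>+x. ennreal (exp (s * x)) \<partial>M) * (\<integral>\<^sup>+x. ennreal (exp (s * x)) \<partial>N)"
proof -
  interpret M: real_distribution M by fact
  interpret N: real_distribution N by fact
  have "(\<integral>\<^sup>+x. ennreal (exp (s * x)) \<partial>(M \<star> N))
      = (\<integral>\<^sup>+x. \<integral>\<^sup>+y. ennreal (exp (s * x)) * ennreal (exp (s * y)) \<partial>N \<partial>M)"
    by (subst nn_integral_convolution)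
      (auto simp: distrib_left exp_add ennreal_mult M.finite_measure_axioms N.finite_measure_axioms)
  also have "\<dots> = (\<integral>\<^sup>+x. ennreal (exp (s * x)) * (\<integral>\<^sup>+y. ennreal (exp (s * y)) \<partial>N) \<partial>M)"
    by (intro nn_integral_cong nn_integral_cmult) measurable
  also have "\<dots> = (\<integral>\<^sup>+x. ennreal (exp (s * x)) \<partial>M) * (\<integral>\<^sup>+y. ennreal (exp (s * y)) \<partial>N)"
    by (rule nn_integral_multc) measurable
  finally show ?thesis .
qed

section \<open>Stochastic order on the real line\<close>

definition up_closed :: "real set \<Rightarrow> bool" where
  "up_closed A \<longleftrightarrow> (\<forall>x\<in>A. \<forall>y\<ge>x. y \<in> A)"

lemma up_closed_sets_borel:
  assumes "up_closed A"
  shows "A \<in> sets borel"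
proof -
  have "mono (indicator A :: real \<Rightarrow> real)"
    using assms unfolding up_closed_def mono_def by (auto simp: indicator_def)
  then have "(indicator A :: real \<Rightarrow> real) \<in> borel_measurable borel"
    by (rule borel_measurable_mono)
  then show ?thesis by (simp add: borel_measurable_indicator_iff)
qed

lemma up_closed_Compl_sets_borel: "up_closed (- B) \<Longrightarrow> B \<in> sets borel"
  using up_closed_sets_borel[of "- B"] sets.compl_sets[of "- B" borel] by simp

lemma up_closed_shift: "up_closed A \<Longrightarrow> up_closed {y. y + x \<in> A}"
  unfolding up_closed_def by (metis add_le_cancel_right mem_Collect_eq)

lemma up_closed_scale: "c > 0 \<Longrightarrow> up_closed A \<Longrightarrow> up_closed {y. c * y \<in> A}"
  unfolding up_closed_def by (auto intro: mult_left_mono)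

lemma up_closed_superlevel: "mono f \<Longrightarrow> up_closed {y. c < f y}"
  unfolding up_closed_def mono_def by (auto intro: less_le_trans)

lemma up_closed_Compl_sublevel:
  assumes "mono f"
  shows "up_closed (- {y. f y < c})"
  unfolding up_closed_def
proof (intro ballI allI impI)
  fix x y assume "x \<in> - {y. f y < c}" "x \<le> y"
  then show "y \<in> - {y. f y < c}" using monoD[OF assms \<open>x \<le> y\<close>] by auto
qed

lemma up_closed_cases:
  assumes U: "up_closed U"
  obtains "U = {}" | "U = UNIV" | t where "U = {t..}" | t where "U = {t<..}"
proof -
  have above: "y \<in> U" if "x \<in> U" "x < y" for x y
    using that U unfolding up_closed_def by auto
  consider "U = {}" | "\<not> bdd_below U" | "U \<noteq> {}" "bdd_below U" by blast
  then show ?thesis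
  proof cases
    case 2
    then have "y \<in> U" for y
      unfolding bdd_below_def by (auto simp: not_le intro: above)
    then show ?thesis using that(2) by blast
  next
    case 3
    have "y \<in> U" if "Inf U < y" for y
      using that cInf_less_iff[OF 3] by (auto intro: above)
    moreover have "Inf U \<le> y" if "y \<in> U" for y
      using that 3 by (intro cInf_lower) auto
    ultimately have "U = {Inf U..} \<or> U = {Inf U<..}"
      by (cases "Inf U \<in> U") (auto simp: less_le)
    then show ?thesis using that(3,4) by blast
  qed (use that in blast)
qed

lemma borel_measurable_mono_ereal:
  fixes f :: "real \<Rightarrow> ereal"
  assumes "mono f"
  shows "f \<in> borel_measurable borel"
  using up_closed_sets_borel[OF up_closed_superlevel[OF assms]]
  by (intro borel_measurableI_greater) simp

definition stoch_le :: "real measure \<Rightarrow> real measure \<Rightarrow> bool" where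
  "stoch_le P Q \<longleftrightarrow> (\<forall>A. up_closed A \<longrightarrow> emeasure P A \<le> emeasure Q A)"

lemma stoch_le_measure:
  assumes "stoch_le P Q" "real_distribution P" "real_distribution Q" "up_closed A"
  shows "measure P A \<le> measure Q A"
proof -
  interpret P: real_distribution P by fact
  interpret Q: real_distribution Q by fact
  show ?thesis
    using assms unfolding stoch_le_def by (simp add: P.emeasure_eq_measure Q.emeasure_eq_measure)
qed

lemma stoch_le_measure_down_closed:
  assumes "stoch_le P Q" "real_distribution P" "real_distribution Q" "up_closed (- B)"
  shows "measure Q B \<le> measure P B"
proof -
  interpret P: real_distribution P by fact
  interpret Q: real_distribution Q by fact
  have "B \<in> sets borel" using assms(4) by (rule up_closed_Compl_sets_borel)
  then have "measure P (- B) = 1 - measure P B" "measure Q (- B) = 1 - measure Q B"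
    using P.prob_compl[of B] Q.prob_compl[of B] by (simp_all add: Compl_eq_Diff_UNIV)
  then show ?thesis using stoch_le_measure[OF assms] by simp
qed

lemma real_distribution_convolution:
  assumes "real_distribution M" "real_distribution N"
  shows "real_distribution (M \<star> N)"
proof -
  interpret M: real_distribution M by fact
  interpret N: real_distribution N by fact
  interpret MN: pair_prob_space M N ..
  show ?thesis unfolding convolution_def
    by (auto simp: real_distribution_def real_distribution_axioms_def intro!: MN.prob_space_distr)
qed

lemma stoch_le_convolution_right:
  assumes M: "real_distribution M" and N1: "real_distribution N1" and N2: "real_distribution N2"
    and le: "stoch_le N1 N2"
  shows "stoch_le (M \<star> N1) (M \<star> N2)"
  unfolding stoch_le_def
proof (intro allI impI)
  interpret M: real_distribution M by fact
  interpret N1: real_distribution N1 by fact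
  interpret N2: real_distribution N2 by fact
  fix A assume A: "up_closed A"
  have "emeasure (M \<star> N1) A = \<integral>\<^sup>+x. emeasure N1 {a. a + x \<in> A} \<partial>M"
    by (intro convolution_emeasure up_closed_sets_borel[OF A]) auto
  also have "\<dots> \<le> \<integral>\<^sup>+x. emeasure N2 {a. a + x \<in> A} \<partial>M"
    using le up_closed_shift[OF A] unfolding stoch_le_def by (intro nn_integral_mono) auto
  also have "\<dots> = emeasure (M \<star> N2) A"
    by (intro convolution_emeasure[symmetric] up_closed_sets_borel[OF A]) auto
  finally show "emeasure (M \<star> N1) A \<le> emeasure (M \<star> N2) A" .
qed

lemma stoch_le_convolution:
  assumes P1: "real_distribution P1" and P2: "real_distribution P2"
    and Q1: "real_distribution Q1" and Q2: "real_distribution Q2"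
    and le: "stoch_le P1 P2" "stoch_le Q1 Q2"
  shows "stoch_le (P1 \<star> Q1) (P2 \<star> Q2)"
proof -
  have comm: "(M \<star> N) = (N \<star> M)" if "real_distribution M" "real_distribution N" for M N
    using that by (intro convolution_commutative)
      (auto simp: real_distribution_def real_distribution_axioms_def prob_space.finite_measure)
  have "stoch_le (P1 \<star> Q1) (P1 \<star> Q2)" "stoch_le (Q2 \<star> P1) (Q2 \<star> P2)"
    using assms by (simp_all add: stoch_le_convolution_right)
  then show ?thesis
    unfolding stoch_le_def comm[OF P1 Q2] comm[OF P2 Q2] by (blast intro: order_trans)
qed

lemma stoch_le_distr_scale:
  assumes le: "stoch_le P Q" and c: "c > 0"
    and P: "real_distribution P" and Q: "real_distribution Q"
  shows "stoch_le (distr P borel (\<lambda>y. c * y)) (distr Q borel (\<lambda>y. c * y))"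
  unfolding stoch_le_def
proof (intro allI impI)
  interpret P: real_distribution P by fact
  interpret Q: real_distribution Q by fact
  fix A assume A: "up_closed A"
  have "emeasure (distr P borel (\<lambda>y. c * y)) A = emeasure P {y. c * y \<in> A}"
    using up_closed_sets_borel[OF A] by (subst emeasure_distr) (auto simp: vimage_def)
  also have "\<dots> \<le> emeasure Q {y. c * y \<in> A}"
    using le up_closed_scale[OF c A] unfolding stoch_le_def by blast
  also have "\<dots> = emeasure (distr Q borel (\<lambda>y. c * y)) A"
    using up_closed_sets_borel[OF A] by (subst emeasure_distr) (auto simp: vimage_def)
  finally show "emeasure (distr P borel (\<lambda>y. c * y)) A \<le> emeasure (distr Q borel (\<lambda>y. c * y)) A" .
qed

text \<open>An up-closed set either lies where the likelihood ratio is at least 1, or its complement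
  lies where it is at most 1.\<close>

lemma stoch_le_density_mono:
  assumes P: "real_distribution P" and r: "mono r"
    and Q: "prob_space (density P (\<lambda>y. ennreal (r y)))"
  shows "stoch_le P (density P (\<lambda>y. ennreal (r y)))"
  unfolding stoch_le_def
proof (intro allI impI)
  interpret P: real_distribution P by fact
  interpret Q: prob_space "density P (\<lambda>y. ennreal (r y))" by fact
  have r_meas[measurable]: "r \<in> borel_measurable borel" using r by (rule borel_measurable_mono)
  have Q_eq: "emeasure (density P (\<lambda>y. ennreal (r y))) B = \<integral>\<^sup>+y. ennreal (r y) * indicator B y \<partial>P"
    if "B \<in> sets borel" for B
    using that by (simp add: emeasure_density)
  fix A assume A: "up_closed A"
  have A_sets: "A \<in> sets borel" using A by (rule up_closed_sets_borel)
  show "emeasure P A \<le> emeasure (density P (\<lambda>y. ennreal (r y))) A"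
  proof (cases "\<forall>y\<in>A. 1 \<le> r y")
    case True
    have "emeasure P A = \<integral>\<^sup>+y. indicator A y \<partial>P" using A_sets by simp
    also have "\<dots> \<le> \<integral>\<^sup>+y. ennreal (r y) * indicator A y \<partial>P"
      using True by (intro nn_integral_mono) (auto simp: indicator_def)
    finally show ?thesis using Q_eq[OF A_sets] by simp
  next
    case False
    then obtain a where a: "a \<in> A" "r a < 1" by (auto simp: not_le)
    have "r y \<le> 1" if "y \<in> - A" for y
    proof -
      have "y \<le> a" using that a(1) A unfolding up_closed_def by (cases "a \<le> y") auto
      then show ?thesis using monoD[OF r] a(2) by fastforce
    qed
    then have "emeasure (density P (\<lambda>y. ennreal (r y))) (- A) \<le> \<integral>\<^sup>+y. indicator (- A) y \<partial>P"
      using Q_eq[of "- A"] A_sets by (auto intro!: nn_integral_mono simp: indicator_def)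
    also have "\<dots> = emeasure P (- A)" using A_sets by simp
    finally have "Q.prob (- A) \<le> P.prob (- A)"
      by (simp add: P.emeasure_eq_measure Q.emeasure_eq_measure)
    moreover have "Q.prob (- A) = 1 - Q.prob A" "P.prob (- A) = 1 - P.prob A"
      using P.prob_compl[of A] Q.prob_compl[of A] A_sets by (auto simp: Compl_eq_Diff_UNIV)
    ultimately show ?thesis by (simp add: P.emeasure_eq_measure Q.emeasure_eq_measure)
  qed
qed

context real_distribution
begin

lemma measure_left_cdf_gt_le:
  assumes "0 \<le> \<delta>"
  shows "measure M {y. 1 - \<delta> < measure M {..<y}} \<le> \<delta>"
proof -
  define U where "U = {y. 1 - \<delta> < measure M {..<y}}"
  have "mono (\<lambda>y. measure M {..<y})"
    by (intro monoI finite_measure_mono) auto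
  then have "up_closed U" unfolding U_def by (rule up_closed_superlevel)
  have cdf_gt: "1 - \<delta> < cdf M y" if "y \<in> U" for y
  proof -
    have "measure M {..<y} \<le> cdf M y"
      unfolding cdf_def by (intro finite_measure_mono) auto
    then show ?thesis using that by (simp add: U_def)
  qed
  from \<open>up_closed U\<close> show ?thesis
  proof (cases rule: up_closed_cases)
    case 1
    then show ?thesis using assms by (simp add: U_def)
  next
    case 2
    then have "1 - \<delta> \<le> cdf M y" for y using cdf_gt less_imp_le by blast
    then have "1 - \<delta> \<le> 0" by (intro tendsto_lowerbound[OF cdf_lim_at_bot]) auto
    then show ?thesis using prob_le_1[of U] unfolding U_def by linarith
  next
    case (3 t)
    then have "measure M U = 1 - measure M {..<t}"
      using prob_compl[of "{..<t}"] by (simp add: Compl_eq_Diff_UNIV[symmetric] Compl_lessThan)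
    moreover have "t \<in> U" using 3 by simp
    ultimately show ?thesis by (simp add: U_def)
  next
    case (4 t)
    have "1 - \<delta> \<le> cdf M t"
    proof (rule tendsto_lowerbound)
      show "(cdf M \<longlongrightarrow> cdf M t) (at_right t)"
        using cdf_is_right_cont by (simp add: continuous_within)
      show "\<forall>\<^sub>F y in at_right t. 1 - \<delta> \<le> cdf M y"
        using eventually_at_right_less by (rule eventually_mono) (use 4 cdf_gt in force)
    qed simp
    moreover have "measure M U = 1 - cdf M t"
      using 4 prob_compl[of "{..t}"] by (simp add: cdf_def Compl_eq_Diff_UNIV[symmetric] Compl_atMost)
    ultimately show ?thesis by (simp add: U_def)
  qed
qed

lemma measure_cdf_lt_le:
  assumes "0 \<le> \<delta>"
  shows "measure M {y. measure M {..y} < \<delta>} \<le> \<delta>"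
proof -
  define D where "D = {y. cdf M y < \<delta>}"
  have "up_closed (- D)" unfolding D_def
    by (intro up_closed_Compl_sublevel monoI cdf_nondecreasing)
  then show ?thesis
  proof (cases rule: up_closed_cases)
    case 1
    then have "y \<in> D" for y by blast
    then have "1 \<le> \<delta>"
      by (intro tendsto_upperbound[OF cdf_lim_at_top_prob]) (auto simp: D_def less_imp_le)
    then show ?thesis by (rule order_trans[OF prob_le_1])
  next
    case 2
    then have "D = {}" by blast
    then show ?thesis using assms by (simp add: D_def cdf_def)
  next
    case (3 s)
    then have D: "D = {..<s}" by (metis Compl_atLeast double_compl)
    have "measure M {..<s} \<le> \<delta>"
    proof (rule tendsto_upperbound[OF cdf_at_left])
      show "\<forall>\<^sub>F y in at_left s. cdf M y \<le> \<delta>"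
        unfolding eventually_at_left_field using D
        by (intro exI[of _ "s - 1"]) (auto simp: D_def set_eq_iff less_imp_le)
    qed simp
    then show ?thesis using D by (simp add: D_def cdf_def)
  next
    case (4 s)
    then have D: "D = {..s}" by (metis Compl_greaterThan double_compl)
    then have "cdf M s < \<delta>" by (auto simp: D_def set_eq_iff)
    then show ?thesis using D by (simp add: D_def cdf_def)
  qed
qed

lemma measure_le_if_left_cdf_gt:
  assumes "0 \<le> \<delta>" "B \<in> sets M" "\<And>y. y \<in> B \<Longrightarrow> 1 - \<delta> < measure M {..<y}"
  shows "measure M B \<le> \<delta>"
proof -
  have "mono (\<lambda>y. measure M {..<y})"
    by (intro monoI finite_measure_mono) auto
  then have "{y. 1 - \<delta> < measure M {..<y}} \<in> sets M"
    using up_closed_sets_borel[OF up_closed_superlevel] by simp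
  then have "measure M B \<le> measure M {y. 1 - \<delta> < measure M {..<y}}"
    using assms(3) by (intro finite_measure_mono) auto
  then show ?thesis using measure_left_cdf_gt_le[OF assms(1)] by linarith
qed

lemma measure_le_if_cdf_lt:
  assumes "0 \<le> \<delta>" "B \<in> sets M" "\<And>y. y \<in> B \<Longrightarrow> measure M {..y} < \<delta>"
  shows "measure M B \<le> \<delta>"
proof -
  have "up_closed (- {y. measure M {..y} < \<delta>})"
    using up_closed_Compl_sublevel[of "cdf M"] cdf_nondecreasing by (auto simp: cdf_def mono_def)
  then have "{y. measure M {..y} < \<delta>} \<in> sets M"
    using up_closed_Compl_sets_borel by simp
  then have "measure M B \<le> measure M {y. measure M {..y} < \<delta>}"
    using assms(3) by (intro finite_measure_mono) auto
  then show ?thesis using measure_cdf_lt_le[OF assms(1)] by linarith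
qed

end

section \<open>Exponential dispersion families\<close>

lemma (in prob_space) variance_pos:
  fixes X :: "'a \<Rightarrow> real"
  assumes X: "integrable M X" "integrable M (\<lambda>x. (X x)\<^sup>2)"
    and nondegenerate: "\<not> (AE x in M. X x = expectation X)"
  shows "0 < variance X"
proof -
  have "integrable M (\<lambda>x. (X x - expectation X)\<^sup>2)"
    using X by (simp add: power2_diff)
  then have "variance X = 0 \<longleftrightarrow> (AE x in M. (X x - expectation X)\<^sup>2 = 0)"
    by (intro integral_nonneg_eq_0_iff_AE) auto
  then have "variance X \<noteq> 0" using nondegenerate by simp
  then show ?thesis using variance_positive[of X] by linarith
qed

lemma (in prob_space) distr_sum_insert_indep:
  fixes X :: "'i \<Rightarrow> 'a \<Rightarrow> real"
  assumes I: "finite I" "i \<notin> I" and indep: "indep_vars (\<lambda>_. borel) X (insert i I)"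
  shows "distr M borel (\<lambda>\<omega>. \<Sum>j\<in>insert i I. X j \<omega>) = (distr M borel (X i) \<star> distr M borel (\<lambda>\<omega>. \<Sum>j\<in>I. X j \<omega>))"
proof -
  have X_meas: "X j \<in> borel_measurable M" if "j \<in> insert i I" for j
    using indep that unfolding indep_vars_def by auto
  have "distr M borel (\<lambda>\<omega>. X i \<omega> + (\<Sum>j\<in>I. X j \<omega>)) = (distr M borel (X i) \<star> distr M borel (\<lambda>\<omega>. \<Sum>j\<in>I. X j \<omega>))"
    using X_meas by (intro sum_indep_random_variable indep_vars_sum[OF I indep]) auto
  then show ?thesis using I by simp
qed

lemma inf_conv_antimono:
  assumes "S1 \<subseteq> S2" "S2 \<subseteq> ereal ` M"
  shows "inf_conv M S2 \<le> inf_conv M S1"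
proof (cases "S1 = {}")
  case True
  have "Inf S2 \<le> Sup (ereal ` M)" if "x \<in> S2" for x
    using that assms(2) Inf_lower[OF that] Sup_upper[of x "ereal ` M"] by auto
  then show ?thesis using True by (auto simp: inf_conv_def)
next
  case False
  then show ?thesis using assms by (auto simp: inf_conv_def Inf_superset_mono)
qed

lemma sup_conv_mono:
  assumes "S1 \<subseteq> S2" "S2 \<subseteq> ereal ` M"
  shows "sup_conv M S1 \<le> sup_conv M S2"
proof (cases "S1 = {}")
  case True
  have "Inf (ereal ` M) \<le> Sup S2" if "x \<in> S2" for x
    using that assms(2) Sup_upper[OF that] Inf_lower[of x "ereal ` M"] by auto
  then show ?thesis using True by (auto simp: sup_conv_def)
next
  case False
  then show ?thesis using assms by (auto simp: sup_conv_def Sup_subset_mono)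
qed

lemma inf_conv_le: "x \<in> S \<Longrightarrow> inf_conv M S \<le> x"
  by (auto simp: inf_conv_def Inf_lower)

lemma sup_conv_ge: "x \<in> S \<Longrightarrow> x \<le> sup_conv M S"
  by (auto simp: sup_conv_def Sup_upper)

lemma sup_conv_le:
  assumes "x \<in> M" "\<And>s. s \<in> S \<Longrightarrow> s \<le> ereal x"
  shows "sup_conv M S \<le> ereal x"
  using assms by (auto simp: sup_conv_def intro: Inf_lower Sup_least)

lemma le_inf_conv:
  assumes "x \<in> M" "\<And>s. s \<in> S \<Longrightarrow> ereal x \<le> s"
  shows "ereal x \<le> inf_conv M S"
  using assms by (auto simp: inf_conv_def intro: Sup_upper Inf_greatest)

lemma borel_measurable_sup_conv:
  assumes "finite S" "\<And>p. p \<in> S \<Longrightarrow> f p \<in> borel_measurable M"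
  shows "(\<lambda>\<omega>. sup_conv Ms ((\<lambda>p. f p \<omega>) ` S)) \<in> borel_measurable M"
  using assms countable_finite[OF assms(1)] by (cases "S = {}") (auto simp: sup_conv_def intro!: borel_measurable_SUP)

lemma borel_measurable_inf_conv:
  assumes "finite S" "\<And>p. p \<in> S \<Longrightarrow> f p \<in> borel_measurable M"
  shows "(\<lambda>\<omega>. inf_conv Ms ((\<lambda>p. f p \<omega>) ` S)) \<in> borel_measurable M"
  using assms countable_finite[OF assms(1)] by (cases "S = {}") (auto simp: inf_conv_def intro!: borel_measurable_INF)

locale edf_family =
  fixes \<nu> :: "real \<Rightarrow> real measure" and a :: "real \<Rightarrow> real \<Rightarrow> real"
    and \<kappa> :: "real \<Rightarrow> real" and \<Theta> :: "real set"
  assumes family: "is_EDF_family \<nu> a \<kappa> \<Theta>"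
begin

text \<open>The EDF depends on volume and dispersion only through the weight w = v / phi.\<close>

definition edf :: "real \<Rightarrow> real \<Rightarrow> real measure" where
  "edf \<theta> w = density (\<nu> w) (\<lambda>y. ennreal (exp (w * (y * \<theta> - \<kappa> \<theta>) + a y w)))"

lemma sets_base [measurable_cong]: "w > 0 \<Longrightarrow> sets (\<nu> w) = sets borel"
  using family by (simp add: is_EDF_family_def)

lemma borel_measurable_a [measurable]: "w > 0 \<Longrightarrow> (\<lambda>y. a y w) \<in> borel_measurable borel"
  using family by (simp add: is_EDF_family_def)

lemma mem_Theta_iff:
  "w > 0 \<Longrightarrow> \<theta> \<in> \<Theta> \<longleftrightarrow> (\<integral>\<^sup>+ y. ennreal (exp (y * \<theta> * w + a y w)) \<partial>\<nu> w) < \<infinity>"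
  using family unfolding is_EDF_family_def by blast

lemma nn_integral_base_exp:
  "w > 0 \<Longrightarrow> \<theta> \<in> \<Theta> \<Longrightarrow> (\<integral>\<^sup>+ y. ennreal (exp (y * \<theta> * w + a y w)) \<partial>\<nu> w) = ennreal (exp (w * \<kappa> \<theta>))"
  using family unfolding is_EDF_family_def by blast

lemma borel_measurable_base: "w > 0 \<Longrightarrow> f \<in> borel_measurable borel \<Longrightarrow> f \<in> borel_measurable (\<nu> w)"
  by (simp add: measurable_cong_sets[OF sets_base refl])

lemma EDF_eq_edf: "v > 0 \<Longrightarrow> \<phi> > 0 \<Longrightarrow> EDF \<nu> a \<kappa> \<theta> v \<phi> = edf \<theta> (v / \<phi>)"
  unfolding EDF_def edf_def
  by (intro arg_cong[where f="density _"] ext) (simp add: divide_divide_eq_right mult.commute)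

lemma sets_edf [simp, measurable_cong]: "w > 0 \<Longrightarrow> sets (edf \<theta> w) = sets borel"
  by (simp add: edf_def sets_base)

lemma nn_integral_edf:
  assumes w: "w > 0" and f: "f \<in> borel_measurable borel"
  shows "(\<integral>\<^sup>+y. f y \<partial>edf \<theta> w) = (\<integral>\<^sup>+y. ennreal (exp (w * (y * \<theta> - \<kappa> \<theta>) + a y w)) * f y \<partial>\<nu> w)"
  unfolding edf_def using w f by (intro nn_integral_density borel_measurable_base) measurable

lemma edf_mgf:
  assumes w: "w > 0" and "\<theta> \<in> \<Theta>" "\<theta> + s \<in> \<Theta>"
  shows "(\<integral>\<^sup>+y. ennreal (exp (w * s * y)) \<partial>edf \<theta> w) = ennreal (exp (w * (\<kappa> (\<theta> + s) - \<kappa> \<theta>)))"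
proof -
  have "(\<integral>\<^sup>+y. ennreal (exp (w * s * y)) \<partial>edf \<theta> w)
      = (\<integral>\<^sup>+y. ennreal (exp (- w * \<kappa> \<theta>)) * ennreal (exp (y * (\<theta> + s) * w + a y w)) \<partial>\<nu> w)"
    using w by (simp add: nn_integral_edf ennreal_mult[symmetric] exp_add[symmetric] algebra_simps
        del: ennreal_mult)
  also have "\<dots> = ennreal (exp (- w * \<kappa> \<theta>)) * ennreal (exp (w * \<kappa> (\<theta> + s)))"
    using assms by (simp add: nn_integral_cmult borel_measurable_base nn_integral_base_exp)
  also have "\<dots> = ennreal (exp (w * (\<kappa> (\<theta> + s) - \<kappa> \<theta>)))"
    by (simp add: ennreal_mult[symmetric] exp_add[symmetric] algebra_simps del: ennreal_mult)
  finally show ?thesis .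
qed

lemma real_distribution_edf:
  assumes w: "w > 0" and \<theta>: "\<theta> \<in> \<Theta>"
  shows "real_distribution (edf \<theta> w)"
proof -
  have space: "space (edf \<theta> w) = UNIV"
    using sets_eq_imp_space_eq[OF sets_edf[OF w]] by simp
  have "emeasure (edf \<theta> w) (space (edf \<theta> w)) = (\<integral>\<^sup>+y. ennreal (exp (w * 0 * y)) \<partial>edf \<theta> w)"
    by (simp add: space nn_integral_indicator[symmetric])
  also have "\<dots> = 1" using edf_mgf[OF w \<theta>, of 0] \<theta> by simp
  finally have "prob_space (edf \<theta> w)" by (rule prob_spaceI)
  then show ?thesis using w by (simp add: real_distribution_def real_distribution_axioms_def)
qed

lemma convex_Theta: "convex \<Theta>"
  unfolding is_interval_convex_1[symmetric] is_interval_1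
proof (intro ballI allI impI)
  fix \<theta>1 \<theta>2 \<theta> assume \<theta>12: "\<theta>1 \<in> \<Theta>" "\<theta>2 \<in> \<Theta>" and between: "\<theta>1 \<le> \<theta> \<and> \<theta> \<le> \<theta>2"
  have "(\<integral>\<^sup>+ y. ennreal (exp (y * \<theta> * 1 + a y 1)) \<partial>\<nu> 1)
     \<le> (\<integral>\<^sup>+ y. ennreal (exp (y * \<theta>1 * 1 + a y 1)) + ennreal (exp (y * \<theta>2 * 1 + a y 1)) \<partial>\<nu> 1)"
  proof (rule nn_integral_mono)
    fix y
    have "y * \<theta> \<le> y * \<theta>1 \<or> y * \<theta> \<le> y * \<theta>2"
      using between by (cases "y \<ge> 0") (auto intro: mult_left_mono mult_left_mono_neg)
    then have "exp (y * \<theta> * 1 + a y 1) \<le> exp (y * \<theta>1 * 1 + a y 1) + exp (y * \<theta>2 * 1 + a y 1)"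
      by (auto intro: add_increasing add_increasing2)
    then show "ennreal (exp (y * \<theta> * 1 + a y 1))
        \<le> ennreal (exp (y * \<theta>1 * 1 + a y 1)) + ennreal (exp (y * \<theta>2 * 1 + a y 1))"
      by (simp add: ennreal_plus[symmetric] del: ennreal_plus)
  qed
  also have "\<dots> = (\<integral>\<^sup>+ y. ennreal (exp (y * \<theta>1 * 1 + a y 1)) \<partial>\<nu> 1) + (\<integral>\<^sup>+ y. ennreal (exp (y * \<theta>2 * 1 + a y 1)) \<partial>\<nu> 1)"
    by (intro nn_integral_add borel_measurable_base) measurable
  also have "\<dots> < \<infinity>" using \<theta>12 mem_Theta_iff[of 1] by (simp add: less_top)
  finally show "\<theta> \<in> \<Theta>" using mem_Theta_iff[of 1] by simp
qed

lemma edf_density_ratio: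
  assumes w: "w > 0"
  shows "edf \<theta>2 w = density (edf \<theta>1 w) (\<lambda>y. ennreal (exp (w * y * (\<theta>2 - \<theta>1) - w * (\<kappa> \<theta>2 - \<kappa> \<theta>1))))"
proof -
  have "density (edf \<theta>1 w) (\<lambda>y. ennreal (exp (w * y * (\<theta>2 - \<theta>1) - w * (\<kappa> \<theta>2 - \<kappa> \<theta>1))))
      = density (\<nu> w) (\<lambda>y. ennreal (exp (w * (y * \<theta>1 - \<kappa> \<theta>1) + a y w))
          * ennreal (exp (w * y * (\<theta>2 - \<theta>1) - w * (\<kappa> \<theta>2 - \<kappa> \<theta>1))))"
    unfolding edf_def using w by (intro density_density_eq borel_measurable_base) measurable
  also have "\<dots> = edf \<theta>2 w"
    unfolding edf_def
    by (intro arg_cong[where f="density _"] ext)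
      (simp add: ennreal_mult[symmetric] exp_add[symmetric] algebra_simps del: ennreal_mult)
  finally show ?thesis ..
qed

lemma stoch_le_edf:
  assumes w: "w > 0" and "\<theta>1 \<in> \<Theta>" "\<theta>2 \<in> \<Theta>" "\<theta>1 \<le> \<theta>2"
  shows "stoch_le (edf \<theta>1 w) (edf \<theta>2 w)"
proof -
  have "mono (\<lambda>y. exp (w * y * (\<theta>2 - \<theta>1) - w * (\<kappa> \<theta>2 - \<kappa> \<theta>1)))"
    using assms by (intro monoI) (auto intro!: mult_right_mono mult_left_mono)
  moreover have "prob_space (density (edf \<theta>1 w) (\<lambda>y. ennreal (exp (w * y * (\<theta>2 - \<theta>1) - w * (\<kappa> \<theta>2 - \<kappa> \<theta>1)))))"
    using real_distribution_edf[OF w assms(3)] edf_density_ratio[OF w, of \<theta>2 \<theta>1]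
    by (simp add: real_distribution_def)
  ultimately have "stoch_le (edf \<theta>1 w)
      (density (edf \<theta>1 w) (\<lambda>y. ennreal (exp (w * y * (\<theta>2 - \<theta>1) - w * (\<kappa> \<theta>2 - \<kappa> \<theta>1)))))"
    by (intro stoch_le_density_mono real_distribution_edf[OF w assms(2)])
  then show ?thesis using edf_density_ratio[OF w, of \<theta>2 \<theta>1] by simp
qed

text \<open>The laws of w * Y for Y distributed as edf theta w form a convolution semigroup in w.\<close>

definition edf_scaled :: "real \<Rightarrow> real \<Rightarrow> real measure" where
  "edf_scaled \<theta> w = distr (edf \<theta> w) borel (\<lambda>y. w * y)"

lemma real_distribution_edf_scaled:
  assumes "w > 0" "\<theta> \<in> \<Theta>"
  shows "real_distribution (edf_scaled \<theta> w)"
  using real_distribution_edf[OF assms] assms unfolding edf_scaled_def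
  by (auto simp: real_distribution_def real_distribution_axioms_def intro!: prob_space.prob_space_distr)

lemma stoch_le_edf_scaled:
  assumes "w > 0" "\<theta>1 \<in> \<Theta>" "\<theta>2 \<in> \<Theta>" "\<theta>1 \<le> \<theta>2"
  shows "stoch_le (edf_scaled \<theta>1 w) (edf_scaled \<theta>2 w)"
  unfolding edf_scaled_def using assms
  by (intro stoch_le_distr_scale stoch_le_edf real_distribution_edf)

lemma edf_scaled_mgf:
  assumes w: "w > 0" and "\<theta> \<in> \<Theta>" "\<theta> + s \<in> \<Theta>"
  shows "(\<integral>\<^sup>+x. ennreal (exp (s * x)) \<partial>edf_scaled \<theta> w) = ennreal (exp (w * (\<kappa> (\<theta> + s) - \<kappa> \<theta>)))"
proof -
  have "(\<integral>\<^sup>+x. ennreal (exp (s * x)) \<partial>edf_scaled \<theta> w) = (\<integral>\<^sup>+y. ennreal (exp (w * s * y)) \<partial>edf \<theta> w)"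
    unfolding edf_scaled_def using w by (subst nn_integral_distr) (simp_all add: mult_ac)
  also have "\<dots> = ennreal (exp (w * (\<kappa> (\<theta> + s) - \<kappa> \<theta>)))"
    by (rule edf_mgf[OF assms])
  finally show ?thesis .
qed

lemma distr_edf_scaled_inverse:
  assumes "w > 0"
  shows "distr (edf_scaled \<theta> w) borel (\<lambda>s. (1 / w) * s) = edf \<theta> w"
proof -
  have "distr (edf_scaled \<theta> w) borel (\<lambda>s. (1 / w) * s) = distr (edf \<theta> w) borel (\<lambda>y. y)"
    unfolding edf_scaled_def using assms by (subst distr_distr) (auto simp: comp_def)
  also have "\<dots> = edf \<theta> w"
    using assms by (intro distr_id2) simp
  finally show ?thesis .
qed

lemma edf_scaled_convolution:
  assumes w1: "w1 > 0" and w2: "w2 > 0" and \<theta>: "\<theta> \<in> interior \<Theta>"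
  shows "(edf_scaled \<theta> w1 \<star> edf_scaled \<theta> w2) = edf_scaled \<theta> (w1 + w2)"
proof -
  obtain e where e: "e > 0" "ball \<theta> e \<subseteq> \<Theta>" using \<theta> mem_interior by blast
  have "\<theta> \<in> \<Theta>" using e by auto
  have near: "\<theta> + s \<in> \<Theta>" if "\<bar>s\<bar> < e" for s
    using that e by (auto simp: dist_real_def)
  note distributions = real_distribution_edf_scaled[OF w1 \<open>\<theta> \<in> \<Theta>\<close>]
    real_distribution_edf_scaled[OF w2 \<open>\<theta> \<in> \<Theta>\<close>]
  have mgf: "(\<integral>\<^sup>+x. ennreal (exp (s * x)) \<partial>(edf_scaled \<theta> w1 \<star> edf_scaled \<theta> w2))
      = (\<integral>\<^sup>+x. ennreal (exp (s * x)) \<partial>edf_scaled \<theta> (w1 + w2))" if "\<bar>s\<bar> < e" for s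
    using w1 w2 \<open>\<theta> \<in> \<Theta>\<close> near[OF that]
    by (simp add: nn_integral_exp_convolution[OF distributions] edf_scaled_mgf
        ennreal_mult[symmetric] exp_add[symmetric] distrib_right del: ennreal_mult)
  show ?thesis
  proof (rule real_distribution_eq_of_mgf_eq[OF _ _ e(1)])
    show "real_distribution (edf_scaled \<theta> w1 \<star> edf_scaled \<theta> w2)"
      using distributions by (rule real_distribution_convolution)
    show "real_distribution (edf_scaled \<theta> (w1 + w2))"
      using w1 w2 \<open>\<theta> \<in> \<Theta>\<close> by (intro real_distribution_edf_scaled) auto
    show "(\<integral>\<^sup>+x. ennreal (exp (s * x)) \<partial>(edf_scaled \<theta> w1 \<star> edf_scaled \<theta> w2)) < \<infinity>" if "\<bar>s\<bar> < e" for s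
      using mgf[OF that] w1 w2 \<open>\<theta> \<in> \<Theta>\<close> near[OF that] by (simp add: edf_scaled_mgf)
  qed (use mgf in simp)
qed

lemma indep_scaled_sum_compare:
  fixes R :: "real measure \<Rightarrow> real measure \<Rightarrow> bool" and Y :: "nat \<Rightarrow> 'b \<Rightarrow> real"
  assumes M: "prob_space M" and indep: "prob_space.indep_vars M (\<lambda>_. borel) Y I0"
    and I: "finite I" "I \<noteq> {}" "I \<subseteq> I0"
    and w: "\<forall>i\<in>I. w i > 0" and \<theta>: "\<forall>i\<in>I. \<theta> i \<in> \<Theta>" and t: "t \<in> interior \<Theta>"
    and law: "\<forall>i\<in>I. distr M borel (\<lambda>\<omega>. w i * Y i \<omega>) = edf_scaled (\<theta> i) (w i)"
    and compare: "\<forall>i\<in>I. R (edf_scaled (\<theta> i) (w i)) (edf_scaled t (w i))"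
    and R_convolution: "\<And>P1 P2 Q1 Q2. real_distribution P1 \<Longrightarrow> real_distribution P2 \<Longrightarrow>
      real_distribution Q1 \<Longrightarrow> real_distribution Q2 \<Longrightarrow> R P1 P2 \<Longrightarrow> R Q1 Q2 \<Longrightarrow> R (P1 \<star> Q1) (P2 \<star> Q2)"
  shows "R (distr M borel (\<lambda>\<omega>. \<Sum>i\<in>I. w i * Y i \<omega>)) (edf_scaled t (\<Sum>i\<in>I. w i))"
  using I w \<theta> law compare
proof (induction I rule: finite_ne_induct)
  case (singleton i)
  then show ?case by simp
next
  case (insert i I)
  interpret M: prob_space M by (rule M)
  have "t \<in> \<Theta>" using t interior_subset by blast
  have w_sum: "(\<Sum>j\<in>I. w j) > 0" using insert by (intro sum_pos) auto
  have "M.indep_vars (\<lambda>_. borel) (\<lambda>j \<omega>. w j * Y j \<omega>) (insert i I)"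
    using M.indep_vars_subset[OF indep insert.prems(1)] by (rule M.indep_vars_compose2) simp
  then have "distr M borel (\<lambda>\<omega>. \<Sum>j\<in>insert i I. w j * Y j \<omega>)
      = (edf_scaled (\<theta> i) (w i) \<star> distr M borel (\<lambda>\<omega>. \<Sum>j\<in>I. w j * Y j \<omega>))"
    using M.distr_sum_insert_indep[OF insert.hyps(1,3)] insert.prems(4) by simp
  moreover have "R (edf_scaled (\<theta> i) (w i) \<star> distr M borel (\<lambda>\<omega>. \<Sum>j\<in>I. w j * Y j \<omega>))
      (edf_scaled t (w i) \<star> edf_scaled t (\<Sum>j\<in>I. w j))"
  proof (rule R_convolution)
    have "Y j \<in> borel_measurable M" if "j \<in> I" for j
      using indep that insert.prems(1) unfolding M.indep_vars_def by auto
    then have "(\<lambda>\<omega>. \<Sum>j\<in>I. w j * Y j \<omega>) \<in> borel_measurable M"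
      by (intro borel_measurable_sum borel_measurable_times borel_measurable_const)
    then show "real_distribution (distr M borel (\<lambda>\<omega>. \<Sum>j\<in>I. w j * Y j \<omega>))"
      by (rule M.real_distribution_distr)
  qed (use insert w_sum \<open>t \<in> \<Theta>\<close> in \<open>auto intro: real_distribution_edf_scaled\<close>)
  moreover have "(edf_scaled t (w i) \<star> edf_scaled t (\<Sum>j\<in>I. w j)) = edf_scaled t (\<Sum>j\<in>insert i I. w j)"
    using insert w_sum by (simp add: edf_scaled_convolution[OF _ _ t])
  ultimately show ?case by simp
qed

lemma edf_exp_moment_zero:
  assumes w: "w > 0" and "\<theta> \<in> \<Theta>" "\<theta> + s / w \<in> \<Theta>"
  shows "exp_moment (edf \<theta> w) 0 s = exp (w * (\<kappa> (\<theta> + s / w) - \<kappa> \<theta>))"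
proof -
  have "(\<integral>\<^sup>+y. ennreal (exp (s * y)) \<partial>edf \<theta> w) = ennreal (exp (w * (\<kappa> (\<theta> + s / w) - \<kappa> \<theta>)))"
    using edf_mgf[OF w assms(2,3)] w by simp
  then have "(\<integral>y. exp (s * y) \<partial>edf \<theta> w) = exp (w * (\<kappa> (\<theta> + s / w) - \<kappa> \<theta>))"
    using w by (subst (asm) nn_integral_eq_integrable) auto
  then show ?thesis by (simp add: exp_moment_def mult.commute)
qed

lemma edf_local_exp_moments:
  assumes w: "w > 0" and \<theta>0: "\<theta>0 \<in> interior \<Theta>"
  obtains e where "e > 0" "integrable (edf \<theta>0 w) (\<lambda>y. exp (w * e * \<bar>y\<bar>))"
    and "\<And>x. \<bar>x - \<theta>0\<bar> \<le> e \<Longrightarrow> exp_moment (edf \<theta>0 w) 0 (w * (x - \<theta>0)) = exp (w * (\<kappa> x - \<kappa> \<theta>0))"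
proof -
  obtain e0 where "e0 > 0" "ball \<theta>0 e0 \<subseteq> \<Theta>" using \<theta>0 mem_interior by blast
  define e where "e = e0 / 2"
  have e: "e > 0" using \<open>e0 > 0\<close> by (simp add: e_def)
  have near: "x \<in> \<Theta>" if "\<bar>x - \<theta>0\<bar> \<le> e" for x
  proof -
    have "x \<in> ball \<theta>0 e0" using that \<open>e0 > 0\<close> by (simp add: dist_real_def e_def abs_minus_commute)
    then show ?thesis using \<open>ball \<theta>0 e0 \<subseteq> \<Theta>\<close> by blast
  qed
  have "\<theta>0 \<in> \<Theta>" using near[of \<theta>0] e by simp
  have "integrable (edf \<theta>0 w) (\<lambda>y. exp (w * e * \<bar>y\<bar>))"
  proof (rule integrable_exp_abs_of_mgf[OF sets_edf[OF w]])
    have "(\<integral>\<^sup>+y. ennreal (exp (w * s * y)) \<partial>edf \<theta>0 w) < \<infinity>" if "\<bar>s\<bar> \<le> e" for s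
      using that edf_mgf[OF w \<open>\<theta>0 \<in> \<Theta>\<close> near[of "\<theta>0 + s"]] by simp
    from this[of e] this[of "- e"]
    show "(\<integral>\<^sup>+y. exp (w * e * y) \<partial>edf \<theta>0 w) < \<infinity>" "(\<integral>\<^sup>+y. exp (- (w * e) * y) \<partial>edf \<theta>0 w) < \<infinity>"
      using e(1) by simp_all
  qed (use w e in simp)
  moreover have "exp_moment (edf \<theta>0 w) 0 (w * (x - \<theta>0)) = exp (w * (\<kappa> x - \<kappa> \<theta>0))"
    if "\<bar>x - \<theta>0\<bar> \<le> e" for x
    using edf_exp_moment_zero[OF w \<open>\<theta>0 \<in> \<Theta>\<close>, of "w * (x - \<theta>0)"] near[OF that] w by simp
  ultimately show ?thesis using that e(1) by blast
qed

text \<open>Near theta0, kappa x = kappa theta0 + ln (mgf (w * (x - theta0))) / w, where mgf is the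
  moment generating function of edf theta0 w.\<close>

lemma kappa_has_derivative_exp_moments:
  assumes w: "w > 0" and \<theta>0: "\<theta>0 \<in> interior \<Theta>"
  obtains e where "e > 0" "integrable (edf \<theta>0 w) (\<lambda>y. exp (w * e * \<bar>y\<bar>))"
    and "\<And>x. \<bar>x - \<theta>0\<bar> < e \<Longrightarrow> exp_moment (edf \<theta>0 w) 0 (w * (x - \<theta>0)) = exp (w * (\<kappa> x - \<kappa> \<theta>0))"
    and "\<And>x. \<bar>x - \<theta>0\<bar> < e \<Longrightarrow> (\<kappa> has_real_derivative
      exp_moment (edf \<theta>0 w) 1 (w * (x - \<theta>0)) / exp_moment (edf \<theta>0 w) 0 (w * (x - \<theta>0))) (at x)"
proof -
  obtain e where e: "e > 0" and int: "integrable (edf \<theta>0 w) (\<lambda>y. exp (w * e * \<bar>y\<bar>))"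
    and mgf: "\<And>x. \<bar>x - \<theta>0\<bar> \<le> e \<Longrightarrow> exp_moment (edf \<theta>0 w) 0 (w * (x - \<theta>0)) = exp (w * (\<kappa> x - \<kappa> \<theta>0))"
    using edf_local_exp_moments[OF w \<theta>0] by blast
  define m where "m k x = (exp_moment (edf \<theta>0 w) k (w * (x - \<theta>0)) :: real)" for k x
  have "(\<kappa> has_real_derivative m 1 x / m 0 x) (at x)" if x: "\<bar>x - \<theta>0\<bar> < e" for x
  proof -
    have "\<bar>w * (x - \<theta>0)\<bar> < w * e" using x w by (simp add: abs_mult)
    then have "(m 0 has_real_derivative m 1 x * w) (at x)"
      unfolding m_def using exp_moment_comp_affine_has_derivative[OF sets_edf[OF w] int] by simp
    moreover have "m 0 x > 0" using mgf x by (simp add: m_def)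
    ultimately have "((\<lambda>x. \<kappa> \<theta>0 + ln (m 0 x) / w) has_real_derivative
        0 + inverse (m 0 x) * (m 1 x * w) / w) (at x)"
      by (intro DERIV_add DERIV_const DERIV_cdivide DERIV_chain2[OF DERIV_ln])
    then have "((\<lambda>x. \<kappa> \<theta>0 + ln (m 0 x) / w) has_real_derivative m 1 x / m 0 x) (at x)"
      using w by (simp add: field_simps)
    then show ?thesis
    proof (rule has_field_derivative_transform_within_open)
      show "\<kappa> \<theta>0 + ln (m 0 y) / w = \<kappa> y" if "y \<in> ball \<theta>0 e" for y
        using that mgf[of y] w by (simp add: m_def dist_real_def abs_minus_commute)
    qed (use x in \<open>auto simp: dist_real_def abs_minus_commute\<close>)
  qed
  then show ?thesis using that e int mgf by (simp add: m_def)
qed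

lemma kappa_has_real_derivative_mean:
  assumes w: "w > 0" and \<theta>: "\<theta> \<in> interior \<Theta>"
  shows "(\<kappa> has_real_derivative (\<integral>y. y \<partial>edf \<theta> w)) (at \<theta>)"
proof -
  obtain e where "e > 0" "integrable (edf \<theta> w) (\<lambda>y. exp (w * e * \<bar>y\<bar>))"
    and mgf: "\<And>x. \<bar>x - \<theta>\<bar> < e \<Longrightarrow> exp_moment (edf \<theta> w) 0 (w * (x - \<theta>)) = exp (w * (\<kappa> x - \<kappa> \<theta>))"
    and d\<kappa>: "\<And>x. \<bar>x - \<theta>\<bar> < e \<Longrightarrow> (\<kappa> has_real_derivative
      exp_moment (edf \<theta> w) 1 (w * (x - \<theta>)) / exp_moment (edf \<theta> w) 0 (w * (x - \<theta>))) (at x)"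
    by (rule kappa_has_derivative_exp_moments[OF w \<theta>]) blast
  have "exp_moment (edf \<theta> w) 0 0 = (1::real)" using mgf[of \<theta>] \<open>e > 0\<close> by simp
  moreover have "exp_moment (edf \<theta> w) 1 0 = (\<integral>y. y \<partial>edf \<theta> w)" by (simp add: exp_moment_def)
  ultimately show ?thesis using d\<kappa>[of \<theta>] \<open>e > 0\<close> by simp
qed

lemma deriv_kappa_eq_mean: "w > 0 \<Longrightarrow> \<theta> \<in> interior \<Theta> \<Longrightarrow> deriv \<kappa> \<theta> = (\<integral>y. y \<partial>edf \<theta> w)"
  by (rule DERIV_imp_deriv[OF kappa_has_real_derivative_mean])

lemma edf_nondegenerate:
  assumes "A1 \<nu> \<Theta>" "w > 0"
  shows "\<not> (AE y in edf \<theta> w. y = c)"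
proof
  assume "AE y in edf \<theta> w. y = c"
  then have "AE y in \<nu> w. y = c"
    unfolding edf_def using assms(2) by (subst (asm) AE_density) (auto intro!: borel_measurable_base)
  then have "emeasure (\<nu> w) (UNIV - {c}) = 0"
    using assms(2) by (subst (asm) AE_iff_measurable[of "UNIV - {c}"])
      (auto simp: sets_base sets_eq_imp_space_eq[OF sets_base])
  then show False using assms unfolding A1_def by blast
qed

text \<open>The second derivative of kappa is the variance of edf theta 1, which (A1) makes positive.\<close>

lemma deriv_kappa_has_pos_derivative:
  assumes A1: "A1 \<nu> \<Theta>" and \<theta>0: "\<theta>0 \<in> interior \<Theta>"
  shows "\<exists>D>0. (deriv \<kappa> has_real_derivative D) (at \<theta>0)"
proof -
  define P where "P = edf \<theta>0 1"
  have w: "(1::real) > 0" by simp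
  obtain e where e: "e > 0" and int: "integrable P (\<lambda>y. exp (1 * e * \<bar>y\<bar>))"
    and mgf: "\<And>x. \<bar>x - \<theta>0\<bar> < e \<Longrightarrow> exp_moment P 0 (1 * (x - \<theta>0)) = exp (1 * (\<kappa> x - \<kappa> \<theta>0))"
    and d\<kappa>: "\<And>x. \<bar>x - \<theta>0\<bar> < e \<Longrightarrow> (\<kappa> has_real_derivative
      exp_moment P 1 (1 * (x - \<theta>0)) / exp_moment P 0 (1 * (x - \<theta>0))) (at x)"
    unfolding P_def by (rule kappa_has_derivative_exp_moments[OF w \<theta>0]) blast
  interpret P: real_distribution P
    unfolding P_def using \<theta>0 interior_subset by (intro real_distribution_edf) auto
  define m where "m k x = (exp_moment P k (x - \<theta>0) :: real)" for k x
  have dm: "(m k has_real_derivative m (Suc k) \<theta>0) (at \<theta>0)" for k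
    unfolding m_def using exp_moment_comp_affine_has_derivative[OF _ int, of 1 \<theta>0 \<theta>0 k] e by simp
  have m00: "m 0 \<theta>0 = 1" using mgf[of \<theta>0] e by (simp add: m_def)
  have "((\<lambda>x. m 1 x / m 0 x) has_real_derivative
      (m 2 \<theta>0 * m 0 \<theta>0 - m 1 \<theta>0 * m 1 \<theta>0) / (m 0 \<theta>0 * m 0 \<theta>0)) (at \<theta>0)"
    using dm[of 1] dm[of 0] m00 by (intro DERIV_divide) (auto simp: numeral_2_eq_2)
  then have "((\<lambda>x. m 1 x / m 0 x) has_real_derivative m 2 \<theta>0 - (m 1 \<theta>0)\<^sup>2) (at \<theta>0)"
    using m00 by (simp add: power2_eq_square)
  then have "(deriv \<kappa> has_real_derivative m 2 \<theta>0 - (m 1 \<theta>0)\<^sup>2) (at \<theta>0)"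
  proof (rule has_field_derivative_transform_within_open)
    show "m 1 x / m 0 x = deriv \<kappa> x" if "x \<in> ball \<theta>0 e" for x
      using that DERIV_imp_deriv[OF d\<kappa>[of x]] by (simp add: m_def dist_real_def abs_minus_commute)
  qed (use e in auto)
  moreover have integrable_power: "integrable P (\<lambda>y. y ^ k)" for k
    using e by (intro integrable_power_of_exp_abs[OF _ int]) auto
  have "\<not> (AE y in P. y = P.expectation (\<lambda>y. y))"
    unfolding P_def by (rule edf_nondegenerate[OF A1 w])
  then have "0 < P.variance (\<lambda>y. y)"
    using integrable_power[of 1] integrable_power[of 2] by (intro P.variance_pos) auto
  then have "0 < m 2 \<theta>0 - (m 1 \<theta>0)\<^sup>2"
    using integrable_power[of 1] integrable_power[of 2]
    by (simp add: P.variance_eq m_def exp_moment_def)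
  ultimately show ?thesis by blast
qed

lemma deriv_kappa_strict_mono_on:
  assumes A1: "A1 \<nu> \<Theta>"
  shows "strict_mono_on (interior \<Theta>) (deriv \<kappa>)"
proof (rule strict_mono_onI)
  fix \<theta>1 \<theta>2 assume \<theta>12: "\<theta>1 \<in> interior \<Theta>" "\<theta>2 \<in> interior \<Theta>" and "\<theta>1 < \<theta>2"
  show "deriv \<kappa> \<theta>1 < deriv \<kappa> \<theta>2"
  proof (rule DERIV_pos_imp_increasing[OF \<open>\<theta>1 < \<theta>2\<close>])
    fix x assume "\<theta>1 \<le> x" "x \<le> \<theta>2"
    then have "x \<in> interior \<Theta>"
      using \<theta>12 convex_interior[OF convex_Theta]
      unfolding is_interval_convex_1[symmetric] is_interval_1 by blast
    then show "\<exists>D. (deriv \<kappa> has_real_derivative D) (at x) \<and> 0 < D"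
      using deriv_kappa_has_pos_derivative[OF A1] by blast
  qed
qed

lemma deriv_kappa_mono:
  "A1 \<nu> \<Theta> \<Longrightarrow> \<theta>1 \<in> interior \<Theta> \<Longrightarrow> \<theta>2 \<in> interior \<Theta> \<Longrightarrow> \<theta>1 \<le> \<theta>2 \<Longrightarrow> deriv \<kappa> \<theta>1 \<le> deriv \<kappa> \<theta>2"
  using strict_mono_on_leD[OF deriv_kappa_strict_mono_on] by blast

lemma link_h_deriv_kappa: "A1 \<nu> \<Theta> \<Longrightarrow> \<theta> \<in> interior \<Theta> \<Longrightarrow> link_h \<kappa> \<Theta> (deriv \<kappa> \<theta>) = \<theta>"
  unfolding link_h_def
  by (rule the_inv_into_f_f[OF strict_mono_on_imp_inj_on[OF deriv_kappa_strict_mono_on]])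

lemma link_h_mem_interior: "A1 \<nu> \<Theta> \<Longrightarrow> \<mu> \<in> mean_space \<kappa> \<Theta> \<Longrightarrow> link_h \<kappa> \<Theta> \<mu> \<in> interior \<Theta>"
  unfolding link_h_def mean_space_def
  by (rule the_inv_into_into[OF strict_mono_on_imp_inj_on[OF deriv_kappa_strict_mono_on]]) auto

lemma real_distribution_EDF_link:
  assumes "A1 \<nu> \<Theta>" "V > 0" "\<phi> > 0" "\<mu> \<in> mean_space \<kappa> \<Theta>"
  shows "real_distribution (EDF \<nu> a \<kappa> (link_h \<kappa> \<Theta> \<mu>) V \<phi>)"
proof -
  have "link_h \<kappa> \<Theta> \<mu> \<in> \<Theta>" using link_h_mem_interior[OF assms(1,4)] interior_subset by blast
  then show ?thesis using assms(2,3) by (simp add: EDF_eq_edf real_distribution_edf)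
qed

lemma edf_F_at_deriv_kappa:
  assumes "A1 \<nu> \<Theta>" "V > 0" "\<phi> > 0" "\<theta> \<in> interior \<Theta>"
  shows "edf_Fstar \<nu> a \<kappa> \<Theta> y (deriv \<kappa> \<theta>) V \<phi> = measure (edf \<theta> (V / \<phi>)) {..<y}"
    and "edf_F \<nu> a \<kappa> \<Theta> y (deriv \<kappa> \<theta>) V \<phi> = measure (edf \<theta> (V / \<phi>)) {..y}"
  unfolding edf_Fstar_def edf_F_def using assms by (simp_all add: link_h_deriv_kappa EDF_eq_edf)

lemma mono_l_delta:
  assumes "A1 \<nu> \<Theta>" "V > 0" "\<phi> > 0"
  shows "mono (\<lambda>y. l_delta \<nu> a \<kappa> \<Theta> \<delta> y V \<phi>)"
proof (rule monoI)
  fix y1 y2 :: real assume "y1 \<le> y2"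
  have "edf_Fstar \<nu> a \<kappa> \<Theta> y1 \<mu> V \<phi> \<le> edf_Fstar \<nu> a \<kappa> \<Theta> y2 \<mu> V \<phi>"
    if "\<mu> \<in> mean_space \<kappa> \<Theta>" for \<mu>
  proof -
    interpret real_distribution "EDF \<nu> a \<kappa> (link_h \<kappa> \<Theta> \<mu>) V \<phi>"
      by (rule real_distribution_EDF_link[OF assms that])
    show ?thesis unfolding edf_Fstar_def using \<open>y1 \<le> y2\<close> by (intro finite_measure_mono) auto
  qed
  then show "l_delta \<nu> a \<kappa> \<Theta> \<delta> y1 V \<phi> \<le> l_delta \<nu> a \<kappa> \<Theta> \<delta> y2 V \<phi>"
    unfolding l_delta_def by (intro inf_conv_antimono) (force intro: order_trans)+
qed

lemma mono_u_delta:
  assumes "A1 \<nu> \<Theta>" "V > 0" "\<phi> > 0"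
  shows "mono (\<lambda>y. u_delta \<nu> a \<kappa> \<Theta> \<delta> y V \<phi>)"
proof (rule monoI)
  fix y1 y2 :: real assume "y1 \<le> y2"
  have "edf_F \<nu> a \<kappa> \<Theta> y1 \<mu> V \<phi> \<le> edf_F \<nu> a \<kappa> \<Theta> y2 \<mu> V \<phi>"
    if "\<mu> \<in> mean_space \<kappa> \<Theta>" for \<mu>
  proof -
    interpret real_distribution "EDF \<nu> a \<kappa> (link_h \<kappa> \<Theta> \<mu>) V \<phi>"
      by (rule real_distribution_EDF_link[OF assms that])
    show ?thesis unfolding edf_F_def using \<open>y1 \<le> y2\<close> by (intro finite_measure_mono) auto
  qed
  then show "u_delta \<nu> a \<kappa> \<Theta> \<delta> y1 V \<phi> \<le> u_delta \<nu> a \<kappa> \<Theta> \<delta> y2 V \<phi>"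
    unfolding u_delta_def by (intro sup_conv_mono) (force intro: order_trans)+
qed

lemma l_delta_gt_imp_left_cdf_gt:
  assumes "A1 \<nu> \<Theta>" "V > 0" "\<phi> > 0" "\<theta> \<in> interior \<Theta>"
    and "ereal (deriv \<kappa> \<theta>) < l_delta \<nu> a \<kappa> \<Theta> \<delta> y V \<phi>"
  shows "1 - \<delta> < measure (edf \<theta> (V / \<phi>)) {..<y}"
proof (rule ccontr)
  assume "\<not> 1 - \<delta> < measure (edf \<theta> (V / \<phi>)) {..<y}"
  then have "deriv \<kappa> \<theta> \<in> {\<mu> \<in> mean_space \<kappa> \<Theta>. edf_Fstar \<nu> a \<kappa> \<Theta> y \<mu> V \<phi> \<le> 1 - \<delta>}"
    using assms(4) edf_F_at_deriv_kappa(1)[OF assms(1-4)] by (simp add: mean_space_def)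
  then have "l_delta \<nu> a \<kappa> \<Theta> \<delta> y V \<phi> \<le> ereal (deriv \<kappa> \<theta>)"
    unfolding l_delta_def by (intro inf_conv_le) blast
  then show False using assms(5) by simp
qed

lemma u_delta_lt_imp_cdf_lt:
  assumes "A1 \<nu> \<Theta>" "V > 0" "\<phi> > 0" "\<theta> \<in> interior \<Theta>"
    and "u_delta \<nu> a \<kappa> \<Theta> \<delta> y V \<phi> < ereal (deriv \<kappa> \<theta>)"
  shows "measure (edf \<theta> (V / \<phi>)) {..y} < \<delta>"
proof (rule ccontr)
  assume "\<not> measure (edf \<theta> (V / \<phi>)) {..y} < \<delta>"
  then have "deriv \<kappa> \<theta> \<in> {\<mu> \<in> mean_space \<kappa> \<Theta>. \<delta> \<le> edf_F \<nu> a \<kappa> \<Theta> y \<mu> V \<phi>}"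
    using assms(4) edf_F_at_deriv_kappa(2)[OF assms(1-4)] by (simp add: mean_space_def)
  then have "ereal (deriv \<kappa> \<theta>) \<le> u_delta \<nu> a \<kappa> \<Theta> \<delta> y V \<phi>"
    unfolding u_delta_def by (intro sup_conv_ge) blast
  then show False using assms(5) by simp
qed

end

section \<open>Simultaneous confidence bounds\<close>

locale edf_sample = edf_family \<nu> a \<kappa> \<Theta> + prob_space M
  for \<nu> :: "real \<Rightarrow> real measure" and a \<kappa> \<Theta> and M :: "'b measure" +
  fixes Y :: "nat \<Rightarrow> 'b \<Rightarrow> real" and n :: nat and \<theta> v :: "nat \<Rightarrow> real" and \<phi> :: real
  assumes A1: "A1 \<nu> \<Theta>" and dispersion_pos: "\<phi> > 0"
    and indep: "indep_vars (\<lambda>_. borel) Y {1..n}"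
    and params: "\<forall>i\<in>{1..n}. v i > 0 \<and> \<theta> i \<in> interior \<Theta>"
    and law: "\<forall>i\<in>{1..n}. distr M borel (Y i) = EDF \<nu> a \<kappa> (\<theta> i) (v i) \<phi>"
begin

lemma random_variable_Y [measurable]: "i \<in> {1..n} \<Longrightarrow> Y i \<in> borel_measurable M"
  using indep unfolding indep_vars_def by auto

lemma integral_Y_eq_deriv_kappa:
  assumes i: "i \<in> {1..n}"
  shows "(\<integral>\<omega>. Y i \<omega> \<partial>M) = deriv \<kappa> (\<theta> i)"
proof -
  have "(\<integral>\<omega>. Y i \<omega> \<partial>M) = (\<integral>y. y \<partial>distr M borel (Y i))"
    using i by (simp add: integral_distr)
  also have "\<dots> = (\<integral>y. y \<partial>edf (\<theta> i) (v i / \<phi>))"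
    using law params dispersion_pos i by (simp add: EDF_eq_edf)
  also have "\<dots> = deriv \<kappa> (\<theta> i)"
    using params dispersion_pos i by (intro deriv_kappa_eq_mean[symmetric]) auto
  finally show ?thesis .
qed

lemma distr_scaled_Y:
  assumes i: "i \<in> {1..n}"
  shows "distr M borel (\<lambda>\<omega>. v i / \<phi> * Y i \<omega>) = edf_scaled (\<theta> i) (v i / \<phi>)"
proof -
  have "edf_scaled (\<theta> i) (v i / \<phi>) = distr (distr M borel (Y i)) borel (\<lambda>y. v i / \<phi> * y)"
    using law params dispersion_pos i by (simp add: edf_scaled_def EDF_eq_edf)
  also have "\<dots> = distr M borel (\<lambda>\<omega>. v i / \<phi> * Y i \<omega>)"
    using i by (subst distr_distr) (simp_all add: comp_def)
  finally show ?thesis ..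
qed

definition weighted_mean :: "nat set \<Rightarrow> 'b \<Rightarrow> real" where
  "weighted_mean I \<omega> = (1 / (\<Sum>i\<in>I. v i)) * (\<Sum>i\<in>I. v i * Y i \<omega>)"

lemma volume_pos: "I \<subseteq> {1..n} \<Longrightarrow> I \<noteq> {} \<Longrightarrow> (\<Sum>i\<in>I. v i) > 0"
  using params by (intro sum_pos) (auto intro: finite_subset)

lemma borel_measurable_scaled_sum:
  "I \<subseteq> {1..n} \<Longrightarrow> (\<lambda>\<omega>. \<Sum>i\<in>I. v i / \<phi> * Y i \<omega>) \<in> borel_measurable M"
  by (intro borel_measurable_times borel_measurable_const borel_measurable_sum) auto

lemma borel_measurable_weighted_mean:
  "I \<subseteq> {1..n} \<Longrightarrow> weighted_mean I \<in> borel_measurable M"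
  unfolding weighted_mean_def[abs_def]
  by (intro borel_measurable_times borel_measurable_const borel_measurable_sum) auto

lemma distr_weighted_mean:
  assumes "I \<subseteq> {1..n}" "I \<noteq> {}"
  shows "distr M borel (weighted_mean I) = distr (distr M borel (\<lambda>\<omega>. \<Sum>i\<in>I. v i / \<phi> * Y i \<omega>)) borel
    (\<lambda>s. (1 / (\<Sum>i\<in>I. v i / \<phi>)) * s)"
proof -
  have "weighted_mean I = (\<lambda>s. (1 / (\<Sum>i\<in>I. v i / \<phi>)) * s) \<circ> (\<lambda>\<omega>. \<Sum>i\<in>I. v i / \<phi> * Y i \<omega>)"
    using volume_pos[OF assms] dispersion_pos
    by (auto simp: weighted_mean_def sum_divide_distrib[symmetric])
  moreover have "distr (distr M borel (\<lambda>\<omega>. \<Sum>i\<in>I. v i / \<phi> * Y i \<omega>)) borel (\<lambda>s. (1 / (\<Sum>i\<in>I. v i / \<phi>)) * s)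
      = distr M borel ((\<lambda>s. (1 / (\<Sum>i\<in>I. v i / \<phi>)) * s) \<circ> (\<lambda>\<omega>. \<Sum>i\<in>I. v i / \<phi> * Y i \<omega>))"
    by (intro distr_distr borel_measurable_scaled_sum assms) simp
  ultimately show ?thesis by (simp only:)
qed

text \<open>R is instantiated with stochastic dominance in both directions.\<close>

lemma weighted_mean_compare:
  fixes R :: "real measure \<Rightarrow> real measure \<Rightarrow> bool"
  assumes I: "I \<subseteq> {1..n}" "I \<noteq> {}" and t: "t \<in> interior \<Theta>"
    and compare: "\<forall>i\<in>I. R (edf_scaled (\<theta> i) (v i / \<phi>)) (edf_scaled t (v i / \<phi>))"
    and R_convolution: "\<And>P1 P2 Q1 Q2. real_distribution P1 \<Longrightarrow> real_distribution P2 \<Longrightarrow>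
      real_distribution Q1 \<Longrightarrow> real_distribution Q2 \<Longrightarrow> R P1 P2 \<Longrightarrow> R Q1 Q2 \<Longrightarrow> R (P1 \<star> Q1) (P2 \<star> Q2)"
    and R_scale: "\<And>P Q c. real_distribution P \<Longrightarrow> real_distribution Q \<Longrightarrow> c > 0 \<Longrightarrow> R P Q \<Longrightarrow>
      R (distr P borel (\<lambda>y. c * y)) (distr Q borel (\<lambda>y. c * y))"
  shows "R (distr M borel (weighted_mean I)) (edf t ((\<Sum>i\<in>I. v i) / \<phi>))"
proof -
  define W where "W = (\<Sum>i\<in>I. v i / \<phi>)"
  have W: "W > 0" "W = (\<Sum>i\<in>I. v i) / \<phi>"
    using volume_pos[OF I] dispersion_pos by (simp_all add: W_def sum_divide_distrib[symmetric])
  have "R (distr M borel (\<lambda>\<omega>. \<Sum>i\<in>I. v i / \<phi> * Y i \<omega>)) (edf_scaled t W)"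
    unfolding W_def
  proof (rule indep_scaled_sum_compare[OF prob_space_axioms indep _ I(2,1) _ _ t _ compare R_convolution])
    show "\<forall>i\<in>I. distr M borel (\<lambda>\<omega>. v i / \<phi> * Y i \<omega>) = edf_scaled (\<theta> i) (v i / \<phi>)"
      using I distr_scaled_Y by auto
  qed (use I params dispersion_pos interior_subset in \<open>auto intro: finite_subset\<close>)
  then have "R (distr (distr M borel (\<lambda>\<omega>. \<Sum>i\<in>I. v i / \<phi> * Y i \<omega>)) borel (\<lambda>s. (1 / W) * s))
      (distr (edf_scaled t W) borel (\<lambda>s. (1 / W) * s))"
    using W(1) t interior_subset
    by (intro R_scale real_distribution_distr borel_measurable_scaled_sum I real_distribution_edf_scaled) auto
  then show ?thesis
    unfolding distr_edf_scaled_inverse[OF W(1)] distr_weighted_mean[OF I] W_def[symmetric] W(2)[symmetric] .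
qed

lemma stoch_le_weighted_mean:
  assumes I: "I \<subseteq> {1..n}" "I \<noteq> {}" and t: "t \<in> interior \<Theta>" "\<forall>i\<in>I. \<theta> i \<le> t"
  shows "stoch_le (distr M borel (weighted_mean I)) (edf t ((\<Sum>i\<in>I. v i) / \<phi>))"
proof (rule weighted_mean_compare[OF I t(1)])
  show "\<forall>i\<in>I. stoch_le (edf_scaled (\<theta> i) (v i / \<phi>)) (edf_scaled t (v i / \<phi>))"
    using I t params dispersion_pos interior_subset by (force intro!: stoch_le_edf_scaled)
qed (simp_all add: stoch_le_convolution stoch_le_distr_scale)

lemma weighted_mean_stoch_le:
  assumes I: "I \<subseteq> {1..n}" "I \<noteq> {}" and t: "t \<in> interior \<Theta>" "\<forall>i\<in>I. t \<le> \<theta> i"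
  shows "stoch_le (edf t ((\<Sum>i\<in>I. v i) / \<phi>)) (distr M borel (weighted_mean I))"
proof (rule weighted_mean_compare[where R="\<lambda>P Q. stoch_le Q P", OF I t(1)])
  show "\<forall>i\<in>I. stoch_le (edf_scaled t (v i / \<phi>)) (edf_scaled (\<theta> i) (v i / \<phi>))"
    using I t params dispersion_pos interior_subset by (force intro!: stoch_le_edf_scaled)
qed (simp_all add: stoch_le_convolution stoch_le_distr_scale)

lemma prob_l_delta_gt_le:
  assumes I: "I \<subseteq> {1..n}" "I \<noteq> {}" and t: "t \<in> interior \<Theta>" "\<forall>i\<in>I. \<theta> i \<le> t" and "0 \<le> \<delta>"
  shows "prob {\<omega> \<in> space M. ereal (deriv \<kappa> t) < l_delta \<nu> a \<kappa> \<Theta> \<delta> (weighted_mean I \<omega>) (\<Sum>i\<in>I. v i) \<phi>} \<le> \<delta>"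
proof -
  define V where "V = (\<Sum>i\<in>I. v i)"
  have V: "V > 0" unfolding V_def by (rule volume_pos[OF I])
  define A where "A = {y. ereal (deriv \<kappa> t) < l_delta \<nu> a \<kappa> \<Theta> \<delta> y V \<phi>}"
  have A: "up_closed A"
    unfolding A_def by (rule up_closed_superlevel[OF mono_l_delta[OF A1 V dispersion_pos]])
  have "t \<in> \<Theta>" using t interior_subset by blast
  have edf_t: "real_distribution (edf t (V / \<phi>))"
    using V dispersion_pos \<open>t \<in> \<Theta>\<close> by (intro real_distribution_edf) auto
  have "prob (weighted_mean I -` A \<inter> space M) = measure (distr M borel (weighted_mean I)) A"
    by (rule measure_distr[symmetric, OF borel_measurable_weighted_mean[OF I(1)] up_closed_sets_borel[OF A]])
  also have "\<dots> \<le> measure (edf t (V / \<phi>)) A"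
    using stoch_le_weighted_mean[OF I t, folded V_def] A edf_t
    by (intro stoch_le_measure real_distribution_distr borel_measurable_weighted_mean I)
  also have "\<dots> \<le> \<delta>"
  proof (rule real_distribution.measure_le_if_left_cdf_gt[OF edf_t \<open>0 \<le> \<delta>\<close>])
    show "A \<in> sets (edf t (V / \<phi>))"
      using up_closed_sets_borel[OF A] V dispersion_pos by simp
    show "1 - \<delta> < measure (edf t (V / \<phi>)) {..<y}" if "y \<in> A" for y
      using that l_delta_gt_imp_left_cdf_gt[OF A1 V dispersion_pos t(1)] by (simp add: A_def)
  qed
  finally show ?thesis by (simp add: A_def V_def vimage_def Int_def conj_commute)
qed

lemma prob_u_delta_lt_le:
  assumes I: "I \<subseteq> {1..n}" "I \<noteq> {}" and t: "t \<in> interior \<Theta>" "\<forall>i\<in>I. t \<le> \<theta> i" and "0 \<le> \<delta>"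
  shows "prob {\<omega> \<in> space M. u_delta \<nu> a \<kappa> \<Theta> \<delta> (weighted_mean I \<omega>) (\<Sum>i\<in>I. v i) \<phi> < ereal (deriv \<kappa> t)} \<le> \<delta>"
proof -
  define V where "V = (\<Sum>i\<in>I. v i)"
  have V: "V > 0" unfolding V_def by (rule volume_pos[OF I])
  define B where "B = {y. u_delta \<nu> a \<kappa> \<Theta> \<delta> y V \<phi> < ereal (deriv \<kappa> t)}"
  have B: "up_closed (- B)"
    unfolding B_def by (rule up_closed_Compl_sublevel[OF mono_u_delta[OF A1 V dispersion_pos]])
  have "t \<in> \<Theta>" using t interior_subset by blast
  have edf_t: "real_distribution (edf t (V / \<phi>))"
    using V dispersion_pos \<open>t \<in> \<Theta>\<close> by (intro real_distribution_edf) auto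
  have "prob (weighted_mean I -` B \<inter> space M) = measure (distr M borel (weighted_mean I)) B"
    by (rule measure_distr[symmetric, OF borel_measurable_weighted_mean[OF I(1)] up_closed_Compl_sets_borel[OF B]])
  also have "\<dots> \<le> measure (edf t (V / \<phi>)) B"
    using weighted_mean_stoch_le[OF I t, folded V_def] B edf_t
    by (intro stoch_le_measure_down_closed real_distribution_distr borel_measurable_weighted_mean I)
  also have "\<dots> \<le> \<delta>"
  proof (rule real_distribution.measure_le_if_cdf_lt[OF edf_t \<open>0 \<le> \<delta>\<close>])
    show "B \<in> sets (edf t (V / \<phi>))"
      using up_closed_Compl_sets_borel[OF B] V dispersion_pos by simp
    show "measure (edf t (V / \<phi>)) {..y} < \<delta>" if "y \<in> B" for y
      using that u_delta_lt_imp_cdf_lt[OF A1 V dispersion_pos t(1)] by (simp add: B_def)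
  qed
  finally show ?thesis by (simp add: B_def V_def vimage_def Int_def conj_commute)
qed

lemma Zmean_eq_weighted_mean: "Zmean v Y j k = weighted_mean {j..k}"
  by (simp add: Zmean_def vol_def weighted_mean_def fun_eq_iff)

definition lower_miss :: "real \<Rightarrow> nat \<Rightarrow> nat \<Rightarrow> 'b set" where
  "lower_miss \<delta> j k =
    {\<omega> \<in> space M. ereal (deriv \<kappa> (\<theta> k)) < l_delta \<nu> a \<kappa> \<Theta> \<delta> (Zmean v Y j k \<omega>) (vol v j k) \<phi>}"

definition upper_miss :: "real \<Rightarrow> nat \<Rightarrow> nat \<Rightarrow> 'b set" where
  "upper_miss \<delta> j k =
    {\<omega> \<in> space M. u_delta \<nu> a \<kappa> \<Theta> \<delta> (Zmean v Y j k \<omega>) (vol v j k) \<phi> < ereal (deriv \<kappa> (\<theta> j))}"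

lemma borel_measurable_block_bounds:
  assumes "1 \<le> j" "j \<le> k" "k \<le> n"
  shows "(\<lambda>\<omega>. l_delta \<nu> a \<kappa> \<Theta> \<delta> (Zmean v Y j k \<omega>) (vol v j k) \<phi>) \<in> borel_measurable M"
    and "(\<lambda>\<omega>. u_delta \<nu> a \<kappa> \<Theta> \<delta> (Zmean v Y j k \<omega>) (vol v j k) \<phi>) \<in> borel_measurable M"
proof -
  have V: "vol v j k > 0"
    unfolding vol_def using assms by (intro volume_pos) auto
  have Z: "Zmean v Y j k \<in> borel_measurable M"
    unfolding Zmean_eq_weighted_mean using assms by (intro borel_measurable_weighted_mean) auto
  show "(\<lambda>\<omega>. l_delta \<nu> a \<kappa> \<Theta> \<delta> (Zmean v Y j k \<omega>) (vol v j k) \<phi>) \<in> borel_measurable M"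
    by (rule measurable_compose[OF Z borel_measurable_mono_ereal[OF mono_l_delta[OF A1 V dispersion_pos]]])
  show "(\<lambda>\<omega>. u_delta \<nu> a \<kappa> \<Theta> \<delta> (Zmean v Y j k \<omega>) (vol v j k) \<phi>) \<in> borel_measurable M"
    by (rule measurable_compose[OF Z borel_measurable_mono_ereal[OF mono_u_delta[OF A1 V dispersion_pos]]])
qed

lemma events_miss:
  assumes "1 \<le> j" "j \<le> k" "k \<le> n"
  shows "lower_miss \<delta> j k \<in> events" "upper_miss \<delta> j k \<in> events"
  using borel_measurable_block_bounds[OF assms, of \<delta>]
  unfolding lower_miss_def upper_miss_def by measurable

lemma prob_lower_miss:
  assumes "mono_on {1..n} \<theta>" "1 \<le> j" "j \<le> k" "k \<le> n" "0 \<le> \<delta>"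
  shows "prob (lower_miss \<delta> j k) \<le> \<delta>"
  using prob_l_delta_gt_le[of "{j..k}" "\<theta> k" \<delta>] assms params mono_onD[OF assms(1)]
  by (simp add: lower_miss_def Zmean_eq_weighted_mean vol_def)

lemma prob_upper_miss:
  assumes "mono_on {1..n} \<theta>" "1 \<le> j" "j \<le> k" "k \<le> n" "0 \<le> \<delta>"
  shows "prob (upper_miss \<delta> j k) \<le> \<delta>"
  using prob_u_delta_lt_le[of "{j..k}" "\<theta> j" \<delta>] assms params mono_onD[OF assms(1)]
  by (simp add: upper_miss_def Zmean_eq_weighted_mean vol_def)

definition misses :: "real \<Rightarrow> (nat \<times> nat) set \<Rightarrow> 'b set" where
  "misses \<delta> J = (\<Union>(j, k)\<in>J. lower_miss \<delta> j k \<union> upper_miss \<delta> j k)"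

definition covering :: "real \<Rightarrow> (nat \<times> nat) set \<Rightarrow> 'b set" where
  "covering \<delta> J = {\<omega> \<in> space M. \<forall>i\<in>{1..n}.
    L_bound \<nu> a \<kappa> \<Theta> \<phi> \<delta> J \<theta> v Y i \<omega> \<le> ereal (\<integral>\<omega>'. Y i \<omega>' \<partial>M)
    \<and> ereal (\<integral>\<omega>'. Y i \<omega>' \<partial>M) \<le> U_bound \<nu> a \<kappa> \<Theta> \<phi> \<delta> J \<theta> v Y i \<omega>}"

lemma events_misses:
  assumes "J \<subseteq> {1..n} \<times> {1..n}" "\<forall>(j, k)\<in>J. j \<le> k"
  shows "(\<lambda>(j, k). lower_miss \<delta> j k \<union> upper_miss \<delta> j k) ` J \<subseteq> events" "misses \<delta> J \<in> events"
proof -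
  show sets: "(\<lambda>(j, k). lower_miss \<delta> j k \<union> upper_miss \<delta> j k) ` J \<subseteq> events"
    unfolding image_subset_iff
  proof clarify
    fix j k assume "(j, k) \<in> J"
    then have "1 \<le> j" "j \<le> k" "k \<le> n" using assms by auto
    then show "lower_miss \<delta> j k \<union> upper_miss \<delta> j k \<in> events" using events_miss by blast
  qed
  show "misses \<delta> J \<in> events"
    unfolding misses_def using sets finite_subset[OF assms(1)] by (intro sets.finite_UN) auto
qed

lemma prob_misses_le:
  assumes "mono_on {1..n} \<theta>" "J \<subseteq> {1..n} \<times> {1..n}" "\<forall>(j, k)\<in>J. j \<le> k" "0 \<le> \<delta>"
  shows "prob (misses \<delta> J) \<le> 2 * real (card J) * \<delta>"
proof -
  have "finite J" using assms(2) by (rule finite_subset) simp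
  have "prob (misses \<delta> J) \<le> (\<Sum>p\<in>J. prob (case p of (j, k) \<Rightarrow> lower_miss \<delta> j k \<union> upper_miss \<delta> j k))"
    unfolding misses_def
    by (rule finite_measure_subadditive_finite[OF \<open>finite J\<close> events_misses(1)[OF assms(2,3)]])
  also have "\<dots> \<le> (\<Sum>p\<in>J. 2 * \<delta>)"
  proof (intro sum_mono, clarify)
    fix j k assume "(j, k) \<in> J"
    then have jk: "1 \<le> j" "j \<le> k" "k \<le> n" using assms(2,3) by auto
    have "prob (lower_miss \<delta> j k \<union> upper_miss \<delta> j k) \<le> prob (lower_miss \<delta> j k) + prob (upper_miss \<delta> j k)"
      by (rule measure_Un_le[OF events_miss[OF jk]])
    also have "\<dots> \<le> 2 * \<delta>"
      using prob_lower_miss[OF assms(1) jk assms(4)] prob_upper_miss[OF assms(1) jk assms(4)] by simp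
    finally show "prob (lower_miss \<delta> j k \<union> upper_miss \<delta> j k) \<le> 2 * \<delta>" .
  qed
  finally show ?thesis by simp
qed

lemma deriv_kappa_params_mono:
  "i \<in> {1..n} \<Longrightarrow> k \<in> {1..n} \<Longrightarrow> \<theta> k \<le> \<theta> i \<Longrightarrow> deriv \<kappa> (\<theta> k) \<le> deriv \<kappa> (\<theta> i)"
  using params by (intro deriv_kappa_mono[OF A1]) auto

lemma L_bound_le_mean:
  assumes J: "J \<subseteq> {1..n} \<times> {1..n}" and i: "i \<in> {1..n}" and no_miss: "\<omega> \<in> space M - misses \<delta> J"
  shows "L_bound \<nu> a \<kappa> \<Theta> \<phi> \<delta> J \<theta> v Y i \<omega> \<le> ereal (\<integral>\<omega>'. Y i \<omega>' \<partial>M)"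
proof -
  have "deriv \<kappa> (\<theta> i) \<in> mean_space \<kappa> \<Theta>" using i params by (auto simp: mean_space_def)
  then show ?thesis
    unfolding L_bound_def integral_Y_eq_deriv_kappa[OF i]
  proof (rule sup_conv_le, clarify)
    fix j k assume jk: "(j, k) \<in> J" "\<theta> k \<le> \<theta> i"
    have "\<omega> \<notin> lower_miss \<delta> j k" using no_miss jk(1) by (auto simp: misses_def)
    then have "l_delta \<nu> a \<kappa> \<Theta> \<delta> (Zmean v Y j k \<omega>) (vol v j k) \<phi> \<le> ereal (deriv \<kappa> (\<theta> k))"
      using no_miss by (simp add: lower_miss_def not_less)
    also have "\<dots> \<le> ereal (deriv \<kappa> (\<theta> i))"
      using deriv_kappa_params_mono[OF i _ jk(2)] jk(1) J by auto
    finally show "l_delta \<nu> a \<kappa> \<Theta> \<delta> (Zmean v Y j k \<omega>) (vol v j k) \<phi> \<le> ereal (deriv \<kappa> (\<theta> i))" .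
  qed
qed

lemma mean_le_U_bound:
  assumes J: "J \<subseteq> {1..n} \<times> {1..n}" and i: "i \<in> {1..n}" and no_miss: "\<omega> \<in> space M - misses \<delta> J"
  shows "ereal (\<integral>\<omega>'. Y i \<omega>' \<partial>M) \<le> U_bound \<nu> a \<kappa> \<Theta> \<phi> \<delta> J \<theta> v Y i \<omega>"
proof -
  have "deriv \<kappa> (\<theta> i) \<in> mean_space \<kappa> \<Theta>" using i params by (auto simp: mean_space_def)
  then show ?thesis
    unfolding U_bound_def integral_Y_eq_deriv_kappa[OF i]
  proof (rule le_inf_conv, clarify)
    fix j k assume jk: "(j, k) \<in> J" "\<theta> i \<le> \<theta> j"
    have "\<omega> \<notin> upper_miss \<delta> j k" using no_miss jk(1) by (auto simp: misses_def)
    then have upper: "ereal (deriv \<kappa> (\<theta> j)) \<le> u_delta \<nu> a \<kappa> \<Theta> \<delta> (Zmean v Y j k \<omega>) (vol v j k) \<phi>"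
      using no_miss by (simp add: upper_miss_def not_less)
    have "ereal (deriv \<kappa> (\<theta> i)) \<le> ereal (deriv \<kappa> (\<theta> j))"
      using deriv_kappa_params_mono[OF _ i jk(2)] jk(1) J by auto
    also note upper
    finally show "ereal (deriv \<kappa> (\<theta> i)) \<le> u_delta \<nu> a \<kappa> \<Theta> \<delta> (Zmean v Y j k \<omega>) (vol v j k) \<phi>" .
  qed
qed

lemma events_covering:
  assumes "J \<subseteq> {1..n} \<times> {1..n}" "\<forall>(j, k)\<in>J. j \<le> k"
  shows "covering \<delta> J \<in> events"
proof -
  have "finite J" using assms(1) by (rule finite_subset) simp
  have bounds: "(\<lambda>\<omega>. l_delta \<nu> a \<kappa> \<Theta> \<delta> (Zmean v Y j k \<omega>) (vol v j k) \<phi>) \<in> borel_measurable M"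
    "(\<lambda>\<omega>. u_delta \<nu> a \<kappa> \<Theta> \<delta> (Zmean v Y j k \<omega>) (vol v j k) \<phi>) \<in> borel_measurable M"
    if "(j, k) \<in> J" for j k
    using that assms by (auto intro!: borel_measurable_block_bounds)
  have [measurable]: "(\<lambda>\<omega>. L_bound \<nu> a \<kappa> \<Theta> \<phi> \<delta> J \<theta> v Y i \<omega>) \<in> borel_measurable M"
    "(\<lambda>\<omega>. U_bound \<nu> a \<kappa> \<Theta> \<phi> \<delta> J \<theta> v Y i \<omega>) \<in> borel_measurable M" for i
    unfolding L_bound_def U_bound_def using \<open>finite J\<close> bounds
    by (auto intro!: borel_measurable_sup_conv borel_measurable_inf_conv intro: finite_subset split: prod.splits)
  show ?thesis unfolding covering_def by measurable
qed

lemma prob_covering_ge: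
  assumes "mono_on {1..n} \<theta>" "J \<subseteq> {1..n} \<times> {1..n}" "\<forall>(j, k)\<in>J. j \<le> k" "0 \<le> \<delta>"
  shows "1 - 2 * real (card J) * \<delta> \<le> prob (covering \<delta> J)"
proof -
  have "space M - misses \<delta> J \<subseteq> covering \<delta> J"
    using L_bound_le_mean[OF assms(2)] mean_le_U_bound[OF assms(2)] by (auto simp: covering_def)
  then have "prob (space M - misses \<delta> J) \<le> prob (covering \<delta> J)"
    by (rule finite_measure_mono[OF _ events_covering[OF assms(2,3)]])
  then show ?thesis
    using prob_misses_le[OF assms] prob_compl[OF events_misses(2)[OF assms(2,3)]] by simp
qed

end

theorem theorem4p1:
  fixes M :: "'a measure" and Y :: "nat \<Rightarrow> 'a \<Rightarrow> real"
    and \<nu> :: "real \<Rightarrow> real measure" and a :: "real \<Rightarrow> real \<Rightarrow> real"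
    and \<kappa> :: "real \<Rightarrow> real" and \<Theta> :: "real set"
    and \<phi> \<alpha> :: real and n :: nat and \<theta> v :: "nat \<Rightarrow> real" and J :: "(nat \<times> nat) set"
  assumes "prob_space M"
    and "is_EDF_family \<nu> a \<kappa> \<Theta>"
    and "A1 \<nu> \<Theta>"
    and "\<phi> > 0"
    and "prob_space.indep_vars M (\<lambda>_. borel) Y {1..n}"
    and "\<forall>i\<in>{1..n}. v i > 0 \<and> \<theta> i \<in> interior \<Theta>"
    and "\<forall>i\<in>{1..n}. distr M borel (Y i) = EDF \<nu> a \<kappa> (\<theta> i) (v i) \<phi>"
    and "\<forall>i\<in>{1..n}. \<forall>j\<in>{1..n}. i \<le> j \<longrightarrow> \<theta> i \<le> \<theta> j"
    and "J \<subseteq> {1..n} \<times> {1..n}"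
    and "\<forall>(j, k)\<in>J. j \<le> k"
    and "0 < 1 - \<alpha>" and "1 - \<alpha> < 1"
  shows "measure M {\<omega> \<in> space M. \<forall>i\<in>{1..n}.
            L_bound \<nu> a \<kappa> \<Theta> \<phi> (\<alpha> / (2 * real (card J))) J \<theta> v Y i \<omega> \<le> ereal (\<integral>\<omega>'. Y i \<omega>' \<partial>M)
          \<and> ereal (\<integral>\<omega>'. Y i \<omega>' \<partial>M) \<le> U_bound \<nu> a \<kappa> \<Theta> \<phi> (\<alpha> / (2 * real (card J))) J \<theta> v Y i \<omega>}
         \<ge> 1 - \<alpha>"
proof -
  interpret edf_sample \<nu> a \<kappa> \<Theta> M Y n \<theta> v \<phi>
    by (rule edf_sample.intro[OF edf_family.intro[OF assms(2)] assms(1) edf_sample_axioms.intro[OF assms(3-7)]])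
  define \<delta> where "\<delta> = \<alpha> / (2 * real (card J))"
  have "mono_on {1..n} \<theta>" using assms(8) by (auto intro: mono_onI)
  moreover have "\<delta> \<ge> 0" using assms(11,12) by (simp add: \<delta>_def)
  ultimately have "1 - 2 * real (card J) * \<delta> \<le> prob (covering \<delta> J)"
    using assms(9,10) by (intro prob_covering_ge)
  moreover have "2 * real (card J) * \<delta> \<le> \<alpha>"
    using assms(11,12) by (cases "card J = 0") (auto simp: \<delta>_def)
  ultimately show ?thesis by (simp add: covering_def \<delta>_def)
qed

end
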